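(* Let $G$ be a domain in $\mathbb{C}^n$ and let $E$ be a pluripolar subset of $G$. Assume $u$ is a plurisubharmonic function on $G$ such that $Z=\{z\in G:u(z)=-\infty\}\supset E$ and $u$ is locally bounded on $G\setminus Z$. Then for every domain $D\Subset G$ and every open set $U\supset Z$, $$\omega(z,E\cap D,D)=\omega(z,E\cap D,U\cap D),\qquad z\in U\cap D.$$
   Context: For an open set $\Omega\subset\mathbb{C}^n$ and $E\subset\Omega$, the relative extremal function (pluriharmonic measure) is $\omega(z,E,\Omega)=-\sup\{v(z): v \text{ plurisubharmonic on }\Omega,\ v\le-1\text{ on }E,\ v\le0\text{ on }\Omega\}$, $z\in\Omega$ (for disconnected $\Omega$ this is computed on each connected component separately). *)

theory Defs
  imports "HOL-Analysis.Analysis"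
begin

text \<open>Points of C^n are modelled as complex ^ 'n with 'n a finite index type.
  Functions take values in ereal (value +\<infinity> excluded for psh functions).\<close>

definition usc_on :: "'a::topological_space set \<Rightarrow> ('a \<Rightarrow> ereal) \<Rightarrow> bool" where
  "usc_on S u \<longleftrightarrow> (\<forall>x\<in>S. \<forall>c. u x < c \<longrightarrow> (\<forall>\<^sub>F y in at x within S. u y < c))"

definition circ_pt :: "complex^'n \<Rightarrow> complex^'n \<Rightarrow> real \<Rightarrow> complex^'n" where
  "circ_pt a b t = (\<chi> i. a $ i + cis t * b $ i)"

definition circle_mean :: "(complex^'n \<Rightarrow> ereal) \<Rightarrow> complex^'n \<Rightarrow> complex^'n \<Rightarrow> ereal" where
  "circle_mean u a b =
     (enn2ereal (\<integral>\<^sup>+ t. e2ennreal (u (circ_pt a b t)) * indicator {0..2*pi} t \<partial>lborel)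
      - enn2ereal (\<integral>\<^sup>+ t. e2ennreal (- u (circ_pt a b t)) * indicator {0..2*pi} t \<partial>lborel))
     / ereal (2*pi)"

text \<open>Plurisubharmonic functions on an open set \<Omega>: upper semicontinuous, < +\<infinity>,
  and sub-mean-value property on every closed complex disc {a + \<zeta> b : |\<zeta>| \<le> 1} in \<Omega>
  (i.e. subharmonic, or identically -\<infinity>, on each complex line).\<close>
definition psh :: "(complex^'n) set \<Rightarrow> (complex^'n \<Rightarrow> ereal) \<Rightarrow> bool" where
  "psh \<Omega> u \<longleftrightarrow> open \<Omega> \<and> usc_on \<Omega> u \<and> (\<forall>z\<in>\<Omega>. u z < \<infinity>) \<and>
     (\<forall>a b. (\<forall>\<zeta>::complex. cmod \<zeta> \<le> 1 \<longrightarrow> (\<chi> i. a $ i + \<zeta> * b $ i) \<in> \<Omega>)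
        \<longrightarrow> u a \<le> circle_mean u a b)"

definition pluripolar :: "(complex^'n) set \<Rightarrow> bool" where
  "pluripolar E \<longleftrightarrow> (\<forall>a\<in>E. \<exists>r>0. \<exists>v. psh (ball a r) v \<and> (\<exists>z\<in>ball a r. v z \<noteq> -\<infinity>)
                         \<and> (\<forall>x\<in>E \<inter> ball a r. v x = -\<infinity>))"

text \<open>Relative extremal function \<omega>(z,E,\<Omega>).  Since psh is a local notion, the
  supremum over psh functions on \<Omega> is automatically computed componentwise.\<close>
definition rel_extremal :: "complex^'n \<Rightarrow> (complex^'n) set \<Rightarrow> (complex^'n) set \<Rightarrow> ereal" where
  "rel_extremal z E \<Omega> =
     - (SUP v \<in> {v. psh \<Omega> v \<and> (\<forall>x\<in>E. v x \<le> -1) \<and> (\<forall>x\<in>\<Omega>. v x \<le> 0)}. v z)"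

end

theory Submission
  imports Defs
begin

text \<open>
  Restricting competitors from \<open>D\<close> to \<open>U \<inter> D\<close> shows that \<open>\<omega>(z, E \<inter> D, D)\<close> is at least
  \<open>\<omega>(z, E \<inter> D, U \<inter> D)\<close>.  Conversely, let \<open>v \<le> 0\<close> be psh on \<open>U \<inter> D\<close> with \<open>v \<le> -1\<close> on
  \<open>E \<inter> D\<close>, and \<open>\<eta> > 0\<close>.  If the pole set \<open>Z = {u = -\<infinity>}\<close> has interior points then \<open>u \<equiv> -\<infinity>\<close>
  (the interior of \<open>Z\<close> is also relatively closed in \<open>G\<close>, by the sub-mean value inequality)
  and \<open>D \<subseteq> U\<close>.  Otherwise the local boundedness of \<open>u\<close> off \<open>Z\<close> makes \<open>u\<close> bounded below
  near the compact set \<open>closure D - U\<close>, and \<open>u \<le> B\<close> on \<open>closure D\<close>; for small \<open>\<epsilon> > 0\<close>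
  the function equal to \<open>max (v - \<eta>) (\<epsilon> (u - B))\<close> on \<open>U \<inter> D\<close> and to \<open>\<epsilon> (u - B)\<close> on \<open>D - U\<close>
  is then psh on \<open>D\<close>, nonpositive, and equal to \<open>v - \<eta> \<le> -1\<close> on \<open>E \<inter> D \<subseteq> Z\<close>.

  Since psh functions are defined by the sub-mean value inequality on all discs, this
  gluing needs the local-to-global principle for that inequality.  It is proved on the
  unit disc by approximating a usc function from above on the circle by the real part
  of a holomorphic polynomial (Lipschitz regularisation and Stone-Weierstrass) and a
  maximum principle for usc functions with the local sub-mean value property.
\<close>

section \<open>Averages over the circle\<close>

definition circle_avg :: "(real \<Rightarrow> ereal) \<Rightarrow> ereal" where
  "circle_avg F = (enn2ereal (\<integral>\<^sup>+ t. e2ennreal (F t) * indicator {0..2*pi} t \<partial>lborel)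
      - enn2ereal (\<integral>\<^sup>+ t. e2ennreal (- F t) * indicator {0..2*pi} t \<partial>lborel)) / ereal (2*pi)"

lemma circle_mean_eq_circle_avg: "circle_mean u a b = circle_avg (\<lambda>t. u (circ_pt a b t))"
  by (simp add: circle_mean_def circle_avg_def)

lemma circle_avg_mono:
  assumes "\<And>t. t \<in> {0..2*pi} \<Longrightarrow> F t \<le> G t"
  shows "circle_avg F \<le> circle_avg G"
proof -
  have pos: "(\<integral>\<^sup>+ t. e2ennreal (F t) * indicator {0..2*pi} t \<partial>lborel)
      \<le> (\<integral>\<^sup>+ t. e2ennreal (G t) * indicator {0..2*pi} t \<partial>lborel)"
    by (rule nn_integral_mono) (auto simp: indicator_def intro!: e2ennreal_mono assms)
  have neg: "(\<integral>\<^sup>+ t. e2ennreal (- G t) * indicator {0..2*pi} t \<partial>lborel)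
      \<le> (\<integral>\<^sup>+ t. e2ennreal (- F t) * indicator {0..2*pi} t \<partial>lborel)"
    by (rule nn_integral_mono) (auto simp: indicator_def intro!: e2ennreal_mono assms)
  show ?thesis unfolding circle_avg_def
    by (intro ereal_divide_right_mono ereal_minus_mono)
       (use pos neg in \<open>auto simp: less_eq_ennreal.rep_eq\<close>)
qed

lemma circle_avg_cong: "(\<And>t. t \<in> {0..2*pi} \<Longrightarrow> F t = G t) \<Longrightarrow> circle_avg F = circle_avg G"
  by (metis circle_avg_mono order.eq_iff)

lemma e2ennreal_bound_minus_add:
  assumes "x \<le> ereal B" "0 \<le> B"
  shows "e2ennreal (ereal B - x) + e2ennreal x = ennreal B + e2ennreal (- x)"
proof (cases x)
  case (real r)
  then show ?thesis
    using assms by (cases "0 \<le> r") (simp_all add: ennreal_plus[symmetric] ennreal_neg)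
qed (use assms in auto)

lemma enn2ereal_diff_eq_of_add_eq:
  assumes sum: "Q + P = ennreal c + N" and "P \<noteq> top" "0 \<le> c"
  shows "enn2ereal P - enn2ereal N = ereal c - enn2ereal Q"
proof -
  obtain p where p: "P = ennreal p" "0 \<le> p" using \<open>P \<noteq> top\<close> by (metis ennreal_cases)
  show ?thesis
  proof (cases "N = top")
    case True
    then have "Q = top" using sum p by (simp add: ennreal_add_eq_top)
    then show ?thesis using True p by simp
  next
    case False
    then obtain n where n: "N = ennreal n" "0 \<le> n" by (metis ennreal_cases)
    then have "Q \<noteq> top" using sum p by (metis ennreal_add_eq_top ennreal_neq_top)
    then obtain q where q: "Q = ennreal q" "0 \<le> q" by (metis ennreal_cases)
    have "q + p = c + n" using sum p q n \<open>0 \<le> c\<close> by (simp flip: ennreal_plus)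
    then show ?thesis using p q n by simp
  qed
qed

text \<open>This form avoids the difference of two possibly infinite integrals.\<close>

lemma circle_avg_eq_bound_minus:
  assumes meas: "F \<in> borel_measurable borel"
    and B: "\<And>t. t \<in> {0..2*pi} \<Longrightarrow> F t \<le> ereal B" and B0: "0 \<le> B"
  shows "circle_avg F = ereal B
           - enn2ereal (\<integral>\<^sup>+ t. e2ennreal (ereal B - F t) * indicator {0..2*pi} t \<partial>lborel) / ereal (2*pi)"
proof -
  define I where "I = (indicator {0..2*pi} :: real \<Rightarrow> ennreal)"
  define P where "P = (\<integral>\<^sup>+ t. e2ennreal (F t) * I t \<partial>lborel)"
  define N where "N = (\<integral>\<^sup>+ t. e2ennreal (- F t) * I t \<partial>lborel)"
  define Q where "Q = (\<integral>\<^sup>+ t. e2ennreal (ereal B - F t) * I t \<partial>lborel)"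
  have pointwise: "e2ennreal (ereal B - F t) * I t + e2ennreal (F t) * I t
      = ennreal B * I t + e2ennreal (- F t) * I t" for t
  proof (cases "t \<in> {0..2*pi}")
    case True
    then show ?thesis using e2ennreal_bound_minus_add[OF B[OF True] B0] by (simp add: I_def)
  qed (simp add: I_def)
  have const: "(\<integral>\<^sup>+ t. ennreal B * I t \<partial>lborel) = ennreal (2*pi*B)"
    unfolding I_def using B0 by (simp add: nn_integral_cmult ennreal_mult' mult.commute)
  have "Q + P = (\<integral>\<^sup>+ t. e2ennreal (ereal B - F t) * I t + e2ennreal (F t) * I t \<partial>lborel)"
    unfolding Q_def P_def using meas by (intro nn_integral_add[symmetric]) (auto simp: I_def)
  also have "\<dots> = (\<integral>\<^sup>+ t. ennreal B * I t + e2ennreal (- F t) * I t \<partial>lborel)"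
    using pointwise by simp
  also have "\<dots> = ennreal (2*pi*B) + N"
    unfolding N_def const[symmetric] using meas by (intro nn_integral_add) (auto simp: I_def)
  finally have sum: "Q + P = ennreal (2*pi*B) + N" .
  have "P \<le> ennreal (2*pi*B)"
    unfolding P_def const[symmetric]
    by (rule nn_integral_mono) (auto simp: I_def indicator_def B intro: e2ennreal_mono[of _ "ereal B", simplified])
  then have "P \<noteq> top" by (metis ennreal_less_top top.not_eq_extremum top_unique)
  have "circle_avg F = (enn2ereal P - enn2ereal N) / ereal (2*pi)"
    unfolding circle_avg_def P_def N_def I_def by simp
  also have "\<dots> = (ereal (2*pi*B) - enn2ereal Q) / ereal (2*pi)"
    using enn2ereal_diff_eq_of_add_eq[OF sum \<open>P \<noteq> top\<close>] B0 by simp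
  also have "\<dots> = ereal B - enn2ereal Q / ereal (2*pi)"
    by (cases "enn2ereal Q") (auto simp: field_simps)
  finally show ?thesis unfolding Q_def I_def .
qed

lemma circle_avg_add_const:
  assumes meas: "F \<in> borel_measurable borel" and B: "\<And>t. t \<in> {0..2*pi} \<Longrightarrow> F t \<le> ereal B"
  shows "circle_avg (\<lambda>t. F t + ereal c) = circle_avg F + ereal c"
proof -
  define B' where "B' = max B 0 + \<bar>c\<bar>"
  have "0 \<le> B'" "0 \<le> B' + c" by (auto simp: B'_def)
  have FB': "F t \<le> ereal B'" if "t \<in> {0..2*pi}" for t
    using B[OF that] by (rule order_trans) (simp add: B'_def)
  define Q where "Q = enn2ereal (\<integral>\<^sup>+ t. e2ennreal (ereal B' - F t) * indicator {0..2*pi} t \<partial>lborel)"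
  have avg: "circle_avg F = ereal B' - Q / ereal (2*pi)"
    unfolding Q_def by (rule circle_avg_eq_bound_minus[OF meas FB' \<open>0 \<le> B'\<close>])
  have "circle_avg (\<lambda>t. F t + ereal c) = ereal (B' + c)
      - enn2ereal (\<integral>\<^sup>+ t. e2ennreal (ereal (B' + c) - (F t + ereal c)) * indicator {0..2*pi} t \<partial>lborel) / ereal (2*pi)"
    by (intro circle_avg_eq_bound_minus)
      (use meas \<open>0 \<le> B' + c\<close> FB' in \<open>auto simp flip: plus_ereal.simps intro: add_right_mono\<close>)
  also have "(\<lambda>t. ereal (B' + c) - (F t + ereal c)) = (\<lambda>t. ereal B' - F t)"
  proof
    fix t show "ereal (B' + c) - (F t + ereal c) = ereal B' - F t" by (cases "F t") auto
  qed
  finally show ?thesis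
    unfolding avg Q_def by (cases "Q") (auto simp: Q_def)
qed

lemma circle_avg_cmult:
  assumes meas: "F \<in> borel_measurable borel" and B: "\<And>t. t \<in> {0..2*pi} \<Longrightarrow> F t \<le> ereal B"
    and e: "0 < e"
  shows "circle_avg (\<lambda>t. ereal e * F t) = ereal e * circle_avg F"
proof -
  define B' where "B' = max B 0"
  have B'0: "0 \<le> B'" unfolding B'_def by simp
  have FB': "F t \<le> ereal B'" if "t \<in> {0..2*pi}" for t
    using B[OF that] by (rule order_trans) (simp add: B'_def)
  have eFB': "ereal e * F t \<le> ereal (e * B')" if "t \<in> {0..2*pi}" for t
    using FB'[OF that] e by (metis ereal_mult_left_mono less_imp_le times_ereal.simps(1) ereal_less_eq(5))
  define Q where "Q = (\<integral>\<^sup>+ t. e2ennreal (ereal B' - F t) * indicator {0..2*pi} t \<partial>lborel)"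
  have avg: "circle_avg F = ereal B' - enn2ereal Q / ereal (2*pi)"
    unfolding Q_def by (rule circle_avg_eq_bound_minus[OF meas FB' B'0])
  have scale: "e2ennreal (ereal (e*B') - ereal e * F t) = ennreal e * e2ennreal (ereal B' - F t)" for t
  proof (cases "F t")
    case (real r)
    then show ?thesis
      using e by (cases "r \<le> B'") (simp_all add: ennreal_mult'[symmetric] right_diff_distrib ennreal_neg)
  qed (use e in \<open>auto simp: e2ennreal_neg\<close>)
  have "circle_avg (\<lambda>t. ereal e * F t) = ereal (e * B')
      - enn2ereal (\<integral>\<^sup>+ t. e2ennreal (ereal (e*B') - ereal e * F t) * indicator {0..2*pi} t \<partial>lborel) / ereal (2*pi)"
    using meas eFB' e B'0 by (intro circle_avg_eq_bound_minus) auto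
  also have "(\<integral>\<^sup>+ t. e2ennreal (ereal (e*B') - ereal e * F t) * indicator {0..2*pi} t \<partial>lborel) = ennreal e * Q"
    unfolding Q_def scale mult.assoc using meas by (intro nn_integral_cmult) auto
  also have "enn2ereal (ennreal e * Q) = ereal e * enn2ereal Q"
    using e by (simp add: times_ennreal.rep_eq)
  finally show ?thesis
    unfolding avg using e by (cases "enn2ereal Q") (auto simp: field_simps)
qed

lemma circle_avg_of_real:
  fixes g :: "real \<Rightarrow> real"
  assumes meas: "g \<in> borel_measurable borel" and K: "\<And>t. t \<in> {0..2*pi} \<Longrightarrow> \<bar>g t\<bar> \<le> K"
  shows "circle_avg (\<lambda>t. ereal (g t)) = ereal ((LINT t:{0..2*pi}|lborel. g t) / (2*pi))"
proof -
  have K0: "0 \<le> K" using K[of 0] by auto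
  have int_g: "set_integrable lborel {0..2*pi} g"
    unfolding set_integrable_def
    by (rule integrableI_bounded_set_indicator[where B=K]) (use meas K in auto)
  then have int_Kg: "set_integrable lborel {0..2*pi} (\<lambda>t. K - g t)"
    by (intro set_integral_diff) (auto simp: set_integrable_def intro!: integrable_real_mult_indicator)
  define I where "I = (LINT t:{0..2*pi}|lborel. g t)"
  have int_eq: "(LINT t:{0..2*pi}|lborel. K - g t) = 2*pi*K - I"
    unfolding I_def using int_g by (subst set_integral_diff)
      (auto simp: set_integral_const set_integrable_def intro!: integrable_real_mult_indicator)
  have int_nonneg: "0 \<le> 2*pi*K - I"
    unfolding int_eq[symmetric] set_lebesgue_integral_def
    by (intro integral_nonneg_AE AE_I2) (use K in \<open>auto simp: indicator_def abs_le_iff\<close>)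
  have "circle_avg (\<lambda>t. ereal (g t)) = ereal K
      - enn2ereal (\<integral>\<^sup>+ t. e2ennreal (ereal K - ereal (g t)) * indicator {0..2*pi} t \<partial>lborel) / ereal (2*pi)"
    by (rule circle_avg_eq_bound_minus) (use meas K K0 in \<open>auto intro: abs_le_D1\<close>)
  also have "(\<integral>\<^sup>+ t. e2ennreal (ereal K - ereal (g t)) * indicator {0..2*pi} t \<partial>lborel)
      = (\<integral>\<^sup>+ t. ennreal (indicator {0..2*pi} t *\<^sub>R (K - g t)) \<partial>lborel)"
    by (intro nn_integral_cong) (auto simp: indicator_def)
  also have "\<dots> = ennreal (2*pi*K - I)"
    unfolding int_eq[symmetric] set_lebesgue_integral_def using int_Kg K
    by (intro nn_integral_eq_integral) (auto simp: set_integrable_def indicator_def abs_le_iff)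
  finally have "circle_avg (\<lambda>t. ereal (g t)) = ereal (I / (2*pi))"
    using int_nonneg by (simp add: field_simps)
  then show ?thesis unfolding I_def .
qed

section \<open>Upper semicontinuity\<close>

lemma usc_onD:
  assumes "usc_on S u" "x \<in> S" "u x < c"
  shows "\<exists>T. open T \<and> x \<in> T \<and> (\<forall>y\<in>T\<inter>S. u y < c)"
proof -
  have "\<forall>\<^sub>F y in at x within S. u y < c" using assms unfolding usc_on_def by blast
  then obtain T where "open T" "x \<in> T" "\<forall>y\<in>T. y \<noteq> x \<longrightarrow> y \<in> S \<longrightarrow> u y < c"
    unfolding eventually_at_topological by blast
  then show ?thesis using assms(3) by (intro exI[of _ T]) auto
qed

lemma usc_onI:
  assumes "\<And>x c. x \<in> S \<Longrightarrow> u x < c \<Longrightarrow> \<exists>T. open T \<and> x \<in> T \<and> (\<forall>y\<in>T\<inter>S. u y < c)"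
  shows "usc_on S u"
  unfolding usc_on_def eventually_at_topological
proof (intro ballI allI impI)
  fix x c assume "x \<in> S" "u x < c"
  then obtain T where "open T" "x \<in> T" "\<forall>y\<in>T\<inter>S. u y < c" using assms by blast
  then show "\<exists>T. open T \<and> x \<in> T \<and> (\<forall>y\<in>T. y \<noteq> x \<longrightarrow> y \<in> S \<longrightarrow> u y < c)" by blast
qed

lemma usc_on_subset:
  assumes "usc_on S u" "T \<subseteq> S" shows "usc_on T u"
proof (rule usc_onI)
  fix x c assume "x \<in> T" "u x < c"
  then have "x \<in> S" using assms(2) by blast
  obtain V where "open V" "x \<in> V" "\<forall>y\<in>V\<inter>S. u y < c" using usc_onD[OF assms(1) \<open>x \<in> S\<close> \<open>u x < c\<close>] by blast
  then show "\<exists>V. open V \<and> x \<in> V \<and> (\<forall>y\<in>V\<inter>T. u y < c)" using assms(2) by blast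
qed

lemma usc_on_compose:
  assumes "usc_on S u" "continuous_on A g" "open A" "g ` A \<subseteq> S"
  shows "usc_on A (\<lambda>x. u (g x))"
proof (rule usc_onI)
  fix x c assume x: "x \<in> A" and c: "u (g x) < c"
  have "g x \<in> S" using assms(4) x by blast
  then obtain T where T: "open T" "g x \<in> T" "\<forall>y\<in>T\<inter>S. u y < c"
    using usc_onD[OF assms(1) _ c] by blast
  have "open (g -` T \<inter> A)"
    using continuous_on_open_vimage[OF assms(3), THEN iffD1, OF assms(2), rule_format, OF T(1)] .
  moreover have "x \<in> g -` T \<inter> A" using x T(2) by blast
  moreover have "u (g y) < c" if "y \<in> (g -` T \<inter> A) \<inter> A" for y
    using that assms(4) T(3) by blast
  ultimately show "\<exists>T'. open T' \<and> x \<in> T' \<and> (\<forall>y\<in>T'\<inter>A. u (g y) < c)"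
    by blast
qed

lemma usc_on_UNIV_borel_measurable:
  fixes F :: "'a::topological_space \<Rightarrow> ereal"
  assumes "usc_on UNIV F"
  shows "F \<in> borel_measurable borel"
proof (subst borel_measurable_ereal_iff_Iio, intro allI)
  fix a
  have "open (F -` {..<a})"
  proof (rule open_subopen[THEN iffD2], intro ballI)
    fix x assume "x \<in> F -` {..<a}"
    then have "F x < a" by simp
    then obtain T where "open T" "x \<in> T" "\<forall>y\<in>T\<inter>UNIV. F y < a" using usc_onD[OF assms UNIV_I] by blast
    then show "\<exists>T. open T \<and> x \<in> T \<and> T \<subseteq> F -` {..<a}" by (intro exI[of _ T]) auto
  qed
  then have "F -` {..<a} \<in> sets borel" by (rule borel_open)
  then show "F -` {..<a} \<inter> space borel \<in> sets borel" by simp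
qed

lemma usc_on_attains_max:
  fixes u :: "'a::topological_space \<Rightarrow> ereal"
  assumes usc: "usc_on S u" and "compact K" "K \<subseteq> S" "K \<noteq> {}"
  shows "\<exists>x\<in>K. \<forall>y\<in>K. u y \<le> u x"
proof (rule ccontr)
  assume no_max: "\<not> ?thesis"
  define s where "s = Sup (u ` K)"
  define Low where "Low c = \<Union>{T. open T \<and> (\<forall>y\<in>T\<inter>S. u y < c)}" for c
  have "K \<subseteq> (\<Union>c\<in>{..<s}. Low c)"
  proof
    fix x assume x: "x \<in> K"
    obtain y where "y \<in> K" "u x < u y" using no_max x by (meson not_le)
    moreover have "u y \<le> s" unfolding s_def using \<open>y \<in> K\<close> by (rule SUP_upper)
    ultimately have "u x < s" by simp
    then obtain c where c: "u x < c" "c < s" using dense by blast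
    obtain T where "open T" "x \<in> T" "\<forall>y\<in>T\<inter>S. u y < c"
      using usc_onD[OF usc subsetD[OF \<open>K \<subseteq> S\<close> x] c(1)] by blast
    then show "x \<in> (\<Union>c\<in>{..<s}. Low c)" using c(2) unfolding Low_def by blast
  qed
  moreover have "open (Low c)" for c unfolding Low_def by auto
  ultimately obtain F where F: "F \<subseteq> {..<s}" "finite F" "K \<subseteq> (\<Union>c\<in>F. Low c)"
    using compactE_image[OF \<open>compact K\<close>, of "{..<s}" Low] by metis
  then have "F \<noteq> {}" using \<open>K \<noteq> {}\<close> by auto
  have "Max F < s" using Max_in[OF F(2) \<open>F \<noteq> {}\<close>] F(1) by auto
  moreover have "s \<le> Max F" unfolding s_def
  proof (rule SUP_least)
    fix y assume "y \<in> K"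
    then obtain c T where "c \<in> F" "open T" "y \<in> T" "\<forall>y\<in>T\<inter>S. u y < c"
      using F(3) unfolding Low_def by blast
    then have "u y < c" using \<open>y \<in> K\<close> \<open>K \<subseteq> S\<close> by blast
    also have "c \<le> Max F" using \<open>c \<in> F\<close> F(2) by simp
    finally show "u y \<le> Max F" by simp
  qed
  ultimately show False by simp
qed

lemma usc_on_bounded_above:
  fixes u :: "'a::topological_space \<Rightarrow> ereal"
  assumes "usc_on S u" "compact K" "K \<subseteq> S" "\<And>x. x \<in> K \<Longrightarrow> u x < \<infinity>"
  shows "\<exists>B\<ge>0. \<forall>x\<in>K. u x \<le> ereal B"
proof (cases "K = {}")
  case False
  then obtain x where x: "x \<in> K" "\<forall>y\<in>K. u y \<le> u x"
    using usc_on_attains_max[OF assms(1-3)] by blast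
  show ?thesis
  proof (cases "u x")
    case (real r)
    have "u y \<le> ereal (max r 0)" if "y \<in> K" for y
      using x(2) that real by (metis ereal_less_eq(3) max.cobounded1 order_trans)
    then show ?thesis by (intro exI[of _ "max r 0"]) auto
  qed (use assms(4)[OF x(1)] x(2) in auto)
qed auto

lemma usc_on_max:
  assumes "usc_on S f" "usc_on S g"
  shows "usc_on S (\<lambda>x. max (f x) (g x))"
proof (rule usc_onI)
  fix x c assume x: "x \<in> S" and "max (f x) (g x) < c"
  then have "f x < c" "g x < c" by auto
  obtain T1 where "open T1" "x \<in> T1" "\<forall>y\<in>T1\<inter>S. f y < c"
    using usc_onD[OF assms(1) x \<open>f x < c\<close>] by blast
  moreover obtain T2 where "open T2" "x \<in> T2" "\<forall>y\<in>T2\<inter>S. g y < c"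
    using usc_onD[OF assms(2) x \<open>g x < c\<close>] by blast
  ultimately show "\<exists>T. open T \<and> x \<in> T \<and> (\<forall>y\<in>T\<inter>S. max (f y) (g y) < c)"
    by (intro exI[of _ "T1 \<inter> T2"]) auto
qed

lemma usc_on_glue:
  fixes \<phi> \<psi> :: "'a::topological_space \<Rightarrow> ereal"
  assumes usc_psi: "usc_on D \<psi>" and usc_phi: "usc_on (U \<inter> D) \<phi>" and "open U"
    and N: "open N" "D - U \<subseteq> N" and below: "\<And>x. x \<in> N \<inter> U \<inter> D \<Longrightarrow> \<phi> x \<le> \<psi> x"
  shows "usc_on D (\<lambda>x. if x \<in> U then max (\<phi> x) (\<psi> x) else \<psi> x)" (is "usc_on D ?w")
proof (rule usc_onI)
  have w_N: "?w x = \<psi> x" if "x \<in> N \<inter> D" for x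
    using below[of x] that by (auto simp: max_def)
  have usc_max: "usc_on (U \<inter> D) (\<lambda>x. max (\<phi> x) (\<psi> x))"
    by (rule usc_on_max[OF usc_phi usc_on_subset[OF usc_psi]]) blast
  fix x c assume x: "x \<in> D" and c: "?w x < c"
  show "\<exists>T. open T \<and> x \<in> T \<and> (\<forall>y\<in>T\<inter>D. ?w y < c)"
  proof (cases "x \<in> U")
    case True
    then have "max (\<phi> x) (\<psi> x) < c" using c by simp
    then obtain T where T: "open T" "x \<in> T" "\<forall>y\<in>T\<inter>(U\<inter>D). max (\<phi> y) (\<psi> y) < c"
      using usc_onD[OF usc_max] True x by blast
    then have "\<forall>y\<in>(T\<inter>U)\<inter>D. ?w y < c" by auto
    then show ?thesis using T(1,2) True \<open>open U\<close> by (intro exI[of _ "T \<inter> U"]) auto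
  next
    case False
    then have "\<psi> x < c" using c by simp
    then obtain T where T: "open T" "x \<in> T" "\<forall>y\<in>T\<inter>D. \<psi> y < c"
      using usc_onD[OF usc_psi x] by blast
    then have "\<forall>y\<in>(T\<inter>N)\<inter>D. ?w y < c" using w_N by auto
    then show ?thesis using T(1,2) False x N by (intro exI[of _ "T \<inter> N"]) auto
  qed
qed

lemma usc_on_diff_continuous:
  assumes usc: "usc_on S f" and fin: "\<And>x. x \<in> S \<Longrightarrow> f x < \<infinity>"
    and h: "continuous_on S h" and S: "open S"
  shows "usc_on S (\<lambda>z. f z - ereal (h z))"
proof (rule usc_onI)
  fix x c assume x: "x \<in> S" and lt: "f x - ereal (h x) < c"
  show "\<exists>T. open T \<and> x \<in> T \<and> (\<forall>y\<in>T\<inter>S. f y - ereal (h y) < c)"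
  proof (cases c)
    case PInf
    have "f y - ereal (h y) < c" if "y \<in> S" for y
      using fin[OF that] PInf by (cases "f y") auto
    then show ?thesis by (intro exI[of _ UNIV]) auto
  next
    case (real r)
    then have "f x < ereal (r + h x)" using lt fin[OF x] by (cases "f x") auto
    then obtain d where d: "f x < ereal d" "d < r + h x" using ereal_dense2 by force
    obtain T where T: "open T" "x \<in> T" "\<forall>y\<in>T\<inter>S. f y < ereal d" using usc_onD[OF usc x d(1)] by blast
    have "open (h -` {d - r<..} \<inter> S)"
      by (rule continuous_on_open_vimage[OF S, THEN iffD1, OF h, rule_format]) simp
    moreover have "f y - ereal (h y) < c" if "y \<in> T \<inter> (h -` {d - r<..} \<inter> S)" for y
    proof -
      have "f y < ereal d" "d - r < h y" using T(3) that by auto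
      then show ?thesis using real by (cases "f y") auto
    qed
    ultimately show ?thesis using T(1,2) d(2) x by (intro exI[of _ "T \<inter> (h -` {d - r<..} \<inter> S)"]) auto
  qed (use lt in simp)
qed

lemma usc_on_cmult_diff:
  assumes "usc_on S u" "\<And>x. x \<in> S \<Longrightarrow> u x < \<infinity>" "0 < e"
  shows "usc_on S (\<lambda>x. ereal e * (u x - ereal B))"
proof (rule usc_onI)
  fix x c assume x: "x \<in> S" and lt: "ereal e * (u x - ereal B) < c"
  show "\<exists>T. open T \<and> x \<in> T \<and> (\<forall>y\<in>T\<inter>S. ereal e * (u y - ereal B) < c)"
  proof (cases c)
    case PInf
    have "ereal e * (u y - ereal B) < c" if "y \<in> S" for y
      using assms(2)[OF that] assms(3) PInf by (cases "u y") auto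
    then show ?thesis by (intro exI[of _ UNIV]) auto
  next
    case (real r)
    have "u x < ereal (r / e + B)"
      using lt real assms(3) assms(2)[OF x] by (cases "u x") (auto simp: field_simps)
    then obtain T where T: "open T" "x \<in> T" "\<forall>y\<in>T\<inter>S. u y < ereal (r / e + B)"
      using usc_onD[OF assms(1) x] by blast
    have "ereal e * (u y - ereal B) < c" if "y \<in> T \<inter> S" for y
    proof -
      have "u y < ereal (r / e + B)" using T(3) that by blast
      then show ?thesis using real assms(3) by (cases "u y") (auto simp: field_simps)
    qed
    then show ?thesis using T by blast
  qed (use lt in simp)
qed

lemma continuous_on_circ_pt: "continuous_on A (circ_pt a b)"
  unfolding circ_pt_def by (intro continuous_on_vec_lambda continuous_intros)

lemma usc_on_circ_pt_measurable:
  assumes "usc_on S u" "\<And>t. circ_pt a b t \<in> S"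
  shows "(\<lambda>t. u (circ_pt a b t)) \<in> borel_measurable borel"
  by (rule usc_on_UNIV_borel_measurable, rule usc_on_compose[OF assms(1) continuous_on_circ_pt open_UNIV])
     (use assms(2) in blast)

lemma usc_on_circ_pt_bounded_above:
  assumes "usc_on S u" "\<And>\<zeta>. cmod \<zeta> = 1 \<Longrightarrow> (\<chi> i. a $ i + \<zeta> * b $ i) \<in> S"
    and "\<And>x. x \<in> S \<Longrightarrow> u x < \<infinity>"
  shows "\<exists>B\<ge>0. \<forall>t. u (circ_pt a b t) \<le> ereal B"
proof -
  define K where "K = (\<lambda>\<zeta>. (\<chi> i. a $ i + \<zeta> * b $ i)) ` sphere 0 1"
  have "compact K" unfolding K_def
    by (rule compact_continuous_image) (auto intro!: continuous_on_vec_lambda continuous_intros)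
  moreover have "K \<subseteq> S" unfolding K_def using assms(2) by auto
  ultimately obtain B where "B \<ge> 0" "\<forall>x\<in>K. u x \<le> ereal B"
    using usc_on_bounded_above[OF assms(1)] assms(3) by blast
  moreover have "circ_pt a b t \<in> K" for t
    unfolding K_def circ_pt_def by (rule image_eqI[of _ _ "cis t"]) auto
  ultimately show ?thesis by blast
qed

lemma norm_vec_cmult: "norm ((\<chi> i. c * b $ i) :: complex^'n) = cmod c * norm b"
  unfolding norm_vec_def by (simp add: norm_mult L2_set_right_distrib)

lemma dist_disc_pt: "dist x ((\<chi> i. x $ i + \<zeta> * b $ i) :: complex^'n) = cmod \<zeta> * norm b"
proof -
  have "x - (\<chi> i. x $ i + \<zeta> * b $ i) = - (\<chi> i. \<zeta> * b $ i)" by (simp add: vec_eq_iff)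
  then show ?thesis by (simp add: dist_norm) (metis norm_minus_cancel norm_vec_cmult)
qed

lemma disc_pt_in_ball:
  assumes "norm b < r" "cmod \<zeta> \<le> 1"
  shows "((\<chi> i. x $ i + \<zeta> * b $ i) :: complex^'n) \<in> ball x r"
proof -
  have "cmod \<zeta> * norm b \<le> norm b" using assms(2) by (simp add: mult_left_le_one_le)
  then show ?thesis using assms(1) dist_disc_pt[of x \<zeta> b] by simp
qed

section \<open>Holomorphic polynomials and their mean value property\<close>

definition hpoly :: "(complex \<times> nat) list \<Rightarrow> complex \<Rightarrow> complex" where
  "hpoly ds z = sum_list (map (\<lambda>(d,m). d * z^m) ds)"

lemma hpoly_Nil [simp]: "hpoly [] z = 0"
  and hpoly_Cons [simp]: "hpoly ((d,m)#ds) z = d * z^m + hpoly ds z"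
  by (simp_all add: hpoly_def)

lemma continuous_on_hpoly: "continuous_on A (hpoly ds)"
proof (induction ds)
  case (Cons a ds)
  obtain d m where "a = (d,m)" by fastforce
  moreover have "continuous_on A (\<lambda>z. d * z^m + hpoly ds z)"
    using Cons by (intro continuous_intros)
  ultimately show ?case by (simp add: fun_eq_iff)
qed (simp add: hpoly_def)

lemma continuous_on_Re_hpoly: "continuous_on A (\<lambda>z. Re (hpoly ds z))"
  by (intro continuous_intros continuous_on_compose2[OF continuous_on_hpoly]) auto

text \<open>The integrand is the derivative of the \<open>2\<pi>\<close>-periodic function
  \<open>(p + e^{it}\<beta>)^{m+1} / (i(m+1))\<close>.\<close>

lemma circle_integral_power_derivative:
  "((\<lambda>t. cis t * \<beta> * (p + cis t * \<beta>)^m) has_integral 0) {0..2*pi}"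
proof -
  define A where "A x = (p + exp(\<i> * x) * \<beta>)^Suc m / (of_nat (Suc m) * \<i>)" for x :: complex
  have "(A has_field_derivative (exp(\<i> * x) * \<beta> * (p + exp(\<i> * x) * \<beta>)^m)) (at x)" for x
  proof -
    have inner: "((\<lambda>x. p + exp(\<i>*x)*\<beta>) has_field_derivative (exp(\<i>*x)*\<i>*\<beta>)) (at x)"
      by (auto intro!: derivative_eq_intros)
    have nz: "of_nat (Suc m) * \<i> \<noteq> (0::complex)" by (simp del: of_nat_Suc)
    have "(A has_field_derivative ((1 + of_nat m) * (exp(\<i>*x)*\<i>*\<beta> * (p + exp(\<i>*x)*\<beta>)^m))
        / (of_nat (Suc m) * \<i>)) (at x)"
      unfolding A_def by (rule DERIV_cdivide[OF DERIV_power_Suc[OF inner]])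
    also have "(1 + of_nat m) * (exp(\<i>*x)*\<i>*\<beta> * (p + exp(\<i>*x)*\<beta>)^m)
        = (of_nat (Suc m) * \<i>) * (exp(\<i> * x) * \<beta> * (p + exp(\<i> * x) * \<beta>)^m)"
      by (simp add: algebra_simps)
    finally show ?thesis using nz by (simp add: mult.assoc)
  qed
  then have "((\<lambda>t. exp(\<i> * of_real t) * \<beta> * (p + exp(\<i> * of_real t) * \<beta>)^m)
      has_integral A (of_real (2*pi)) - A (of_real 0)) {0..2*pi}"
    by (intro fundamental_theorem_of_calculus) (auto intro!: has_vector_derivative_real_field)
  moreover have "exp (\<i> * of_real (2*pi)) = 1" using cis_2pi by (simp only: cis_conv_exp)
  ultimately show ?thesis by (simp add: A_def cis_conv_exp)
qed

lemma circle_integral_power: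
  "((\<lambda>t. (p + cis t * \<beta>)^m) has_integral (of_real (2*pi) * p^m)) {0..2*pi}"
proof (induction m)
  case 0
  show ?case using has_integral_const_real[of "1::complex" 0 "2*pi"] by (simp add: scaleR_conv_of_real)
next
  case (Suc m)
  have "((\<lambda>t. p * (p + cis t * \<beta>)^m + cis t * \<beta> * (p + cis t * \<beta>)^m)
      has_integral (p * (of_real (2*pi) * p^m) + 0)) {0..2*pi}"
    by (intro has_integral_add has_integral_mult_right Suc circle_integral_power_derivative)
  then show ?case by (simp add: algebra_simps)
qed

lemma circle_integral_hpoly:
  "((\<lambda>t. hpoly ds (p + cis t * \<beta>)) has_integral (of_real (2*pi) * hpoly ds p)) {0..2*pi}"
proof (induction ds)
  case (Cons a ds)
  obtain d m where a: "a = (d,m)" by fastforce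
  have "((\<lambda>t. d * (p + cis t * \<beta>)^m + hpoly ds (p + cis t * \<beta>))
      has_integral (d * (of_real (2*pi) * p^m) + of_real (2*pi) * hpoly ds p)) {0..2*pi}"
    by (intro has_integral_add has_integral_mult_right Cons circle_integral_power)
  then show ?case using a by (simp add: algebra_simps)
qed simp

lemma circle_integral_Re_hpoly:
  shows "set_integrable lborel {0..2*pi} (\<lambda>t. Re (hpoly ds (p + cis t * \<beta>)))"
    and "(LINT t:{0..2*pi}|lborel. Re (hpoly ds (p + cis t * \<beta>))) = 2*pi * Re (hpoly ds p)"
proof -
  have "continuous_on {0..2*pi} (\<lambda>t. Re (hpoly ds (p + cis t * \<beta>)))"
    by (intro continuous_on_compose2[OF continuous_on_Re_hpoly[of UNIV]] continuous_intros) auto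
  then show int: "set_integrable lborel {0..2*pi} (\<lambda>t. Re (hpoly ds (p + cis t * \<beta>)))"
    by (rule borel_integrable_atLeastAtMost')
  have "((\<lambda>t. Re (hpoly ds (p + cis t * \<beta>))) has_integral (2*pi * Re (hpoly ds p))) {0..2*pi}"
    using has_integral_linear[OF circle_integral_hpoly bounded_linear_Re] by (simp add: o_def)
  then show "(LINT t:{0..2*pi}|lborel. Re (hpoly ds (p + cis t * \<beta>))) = 2*pi * Re (hpoly ds p)"
    using set_borel_integral_eq_integral(2)[OF int] by (simp add: integral_unique)
qed

lemma circle_integral_Re_hpoly_dip:
  "(LINT t:{0..2*pi}|lborel. Re (hpoly ds (p + cis t * \<beta>)) + m - d * indicator {0..pi/3} t)
    = 2*pi * Re (hpoly ds p) + 2*pi*m - d * (pi/3)"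
proof -
  have int_m: "set_integrable lborel {0..2*pi} (\<lambda>t. m)"
    by (rule borel_integrable_atLeastAtMost') (intro continuous_intros)
  have int_hm: "set_integrable lborel {0..2*pi} (\<lambda>t. Re (hpoly ds (p + cis t * \<beta>)) + m)"
    using circle_integral_Re_hpoly(1) int_m by (rule set_integral_add(1))
  have int_dip: "set_integrable lborel {0..2*pi} (\<lambda>t. d * indicator {0..pi/3} t)"
    unfolding set_integrable_def
    by (rule integrableI_bounded_set_indicator[where B = "\<bar>d\<bar>"]) (auto simp: indicator_def)
  have "(LINT t:{0..2*pi}|lborel. d * indicator {0..pi/3} t) = (LBINT t. d * indicator {0..pi/3} t)"
    unfolding set_lebesgue_integral_def by (intro Bochner_Integration.integral_cong) (auto simp: indicator_def)
  then have dip: "(LINT t:{0..2*pi}|lborel. d * indicator {0..pi/3} t) = d * (pi/3)" by simp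
  have "(LINT t:{0..2*pi}|lborel. Re (hpoly ds (p + cis t * \<beta>)) + m - d * indicator {0..pi/3} t)
      = (LINT t:{0..2*pi}|lborel. Re (hpoly ds (p + cis t * \<beta>)) + m) - d * (pi/3)"
    using set_integral_diff(2)[OF int_hm int_dip] dip by simp
  also have "(LINT t:{0..2*pi}|lborel. Re (hpoly ds (p + cis t * \<beta>)) + m) = 2*pi * Re (hpoly ds p) + 2*pi*m"
    using set_integral_add(2)[OF circle_integral_Re_hpoly(1) int_m] circle_integral_Re_hpoly(2)[of ds p \<beta>]
    by (simp add: set_integral_const)
  finally show ?thesis .
qed

lemma circle_avg_Re_hpoly_dip:
  "circle_avg (\<lambda>t. ereal (Re (hpoly ds (p + cis t * \<beta>)) + m - d * indicator {0..pi/3} t))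
    = ereal (Re (hpoly ds p) + m - d / 6)"
proof -
  define h where "h t = Re (hpoly ds (p + cis t * \<beta>))" for t
  have cont_h: "continuous_on A h" for A
    unfolding h_def by (intro continuous_on_compose2[OF continuous_on_Re_hpoly[of UNIV]] continuous_intros) auto
  have "bounded (h ` {0..2*pi})" by (intro compact_imp_bounded compact_continuous_image cont_h compact_Icc)
  then obtain K where "\<forall>x\<in>h ` {0..2*pi}. norm x \<le> K" unfolding bounded_iff by blast
  then have K: "\<forall>t\<in>{0..2*pi}. \<bar>h t\<bar> \<le> K" by auto
  have "circle_avg (\<lambda>t. ereal (h t + m - d * indicator {0..pi/3} t))
      = ereal ((LINT t:{0..2*pi}|lborel. h t + m - d * indicator {0..pi/3} t) / (2*pi))"
  proof (rule circle_avg_of_real[where K = "K + \<bar>m\<bar> + \<bar>d\<bar>"])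
    show "(\<lambda>t. h t + m - d * indicator {0..pi/3} t) \<in> borel_measurable borel"
      using borel_measurable_continuous_onI[OF cont_h] by measurable
    show "\<bar>h t + m - d * indicator {0..pi/3} t\<bar> \<le> K + \<bar>m\<bar> + \<bar>d\<bar>" if "t \<in> {0..2*pi}" for t
    proof -
      have "\<bar>h t\<bar> \<le> K" using K that by blast
      moreover have "\<bar>d * indicator {0..pi/3} t\<bar> \<le> \<bar>d\<bar>" by (simp add: indicator_def)
      ultimately show ?thesis by linarith
    qed
  qed
  then show ?thesis unfolding h_def circle_integral_Re_hpoly_dip by (simp add: field_simps)
qed

definition zzbar_poly :: "(complex \<times> nat \<times> nat) list \<Rightarrow> complex \<Rightarrow> complex" where
  "zzbar_poly xs z = sum_list (map (\<lambda>(c,j,k). c * z^j * cnj z^k) xs)"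

lemma zzbar_poly_Nil [simp]: "zzbar_poly [] z = 0"
  and zzbar_poly_Cons [simp]: "zzbar_poly ((c,j,k)#xs) z = c * z^j * cnj z^k + zzbar_poly xs z"
  and zzbar_poly_append [simp]: "zzbar_poly (xs @ ys) z = zzbar_poly xs z + zzbar_poly ys z"
  by (simp_all add: zzbar_poly_def)

definition zzbar_poly_mult :: "(complex \<times> nat \<times> nat) list \<Rightarrow> (complex \<times> nat \<times> nat) list \<Rightarrow> (complex \<times> nat \<times> nat) list" where
  "zzbar_poly_mult xs ys = concat (map (\<lambda>(c,j,k). map (\<lambda>(d,j',k'). (c*d, j+j', k+k')) ys) xs)"

lemma zzbar_poly_mult: "zzbar_poly (zzbar_poly_mult xs ys) z = zzbar_poly xs z * zzbar_poly ys z"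
proof (induction xs)
  case (Cons x xs)
  obtain c j k where x: "x = (c,j,k)" by (cases x) auto
  have monomial: "zzbar_poly (map (\<lambda>(d,j',k'). (c*d, j+j', k+k')) ys) z = c * z^j * cnj z^k * zzbar_poly ys z"
    by (induction ys) (auto simp: power_add algebra_simps)
  have "zzbar_poly_mult (x#xs) ys = map (\<lambda>(d,j',k'). (c*d, j+j', k+k')) ys @ zzbar_poly_mult xs ys"
    using x by (simp add: zzbar_poly_mult_def)
  then have "zzbar_poly (zzbar_poly_mult (x#xs) ys) z
      = zzbar_poly (map (\<lambda>(d,j',k'). (c*d, j+j', k+k')) ys) z + zzbar_poly (zzbar_poly_mult xs ys) z"
    by (simp only: zzbar_poly_append)
  also have "\<dots> = c * z^j * cnj z^k * zzbar_poly ys z + zzbar_poly xs z * zzbar_poly ys z"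
    by (simp only: monomial Cons.IH)
  finally show ?case using x by (simp add: algebra_simps)
qed (simp add: zzbar_poly_mult_def)

lemma real_polynomial_function_zzbar_poly:
  fixes P :: "complex \<Rightarrow> real"
  assumes "real_polynomial_function P"
  shows "\<exists>xs. \<forall>z. complex_of_real (P z) = zzbar_poly xs z"
  using assms
proof (induction rule: real_polynomial_function.induct)
  case (linear f)
  have f: "f z = Re z * f 1 + Im z * f \<i>" for z
  proof -
    have "Re z *\<^sub>R 1 + Im z *\<^sub>R \<i> = z" by (simp add: complex_eq_iff)
    then have "f z = f (Re z *\<^sub>R 1 + Im z *\<^sub>R \<i>)" by simp
    also have "\<dots> = Re z * f 1 + Im z * f \<i>"
      using bounded_linear.linear[OF linear] by (simp add: real_vector.linear_add real_vector.linear_scale)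
    finally show ?thesis .
  qed
  define \<alpha> where "\<alpha> = complex_of_real (f 1) / 2 + complex_of_real (f \<i>) / (2*\<i>)"
  define \<gamma> where "\<gamma> = complex_of_real (f 1) / 2 - complex_of_real (f \<i>) / (2*\<i>)"
  have "complex_of_real (f z) = zzbar_poly [(\<alpha>,1,0),(\<gamma>,0,1)] z" for z
  proof -
    have "complex_of_real (Re z) = (z + cnj z)/2" by (simp add: complex_add_cnj)
    moreover have "complex_of_real (Im z) = (z - cnj z)/(2*\<i>)" by (simp add: complex_eq_iff)
    ultimately have "complex_of_real (f z) = (z + cnj z)/2 * of_real (f 1) + (z - cnj z)/(2*\<i>) * of_real (f \<i>)"
      by (subst f[of z]) simp
    also have "\<dots> = zzbar_poly [(\<alpha>,1,0),(\<gamma>,0,1)] z"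
      unfolding \<alpha>_def \<gamma>_def by (simp add: field_simps)
    finally show ?thesis .
  qed
  then show ?case by blast
next
  case (const c)
  have "complex_of_real c = zzbar_poly [(of_real c,0,0)] z" for z by simp
  then show ?case by blast
next
  case (add f g)
  then obtain xs ys where "\<forall>z. complex_of_real (f z) = zzbar_poly xs z" "\<forall>z. complex_of_real (g z) = zzbar_poly ys z"
    by blast
  then have "complex_of_real (f z + g z) = zzbar_poly (xs @ ys) z" for z by simp
  then show ?case by blast
next
  case (mult f g)
  then obtain xs ys where "\<forall>z. complex_of_real (f z) = zzbar_poly xs z" "\<forall>z. complex_of_real (g z) = zzbar_poly ys z"
    by blast
  then have "complex_of_real (f z * g z) = zzbar_poly (zzbar_poly_mult xs ys) z" for z by (simp add: zzbar_poly_mult)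
  then show ?case by blast
qed

text \<open>On the unit circle \<open>z\<^sup>\<dagger> = 1/z\<close>, so \<open>c z^j z\<^sup>\<dagger>^k\<close> is \<open>c z^{j-k}\<close> or the conjugate of
  \<open>c\<^sup>\<dagger> z^{k-j}\<close>; either way its real part is that of a holomorphic monomial.\<close>

definition circle_hmonomial :: "complex \<times> nat \<times> nat \<Rightarrow> complex \<times> nat" where
  "circle_hmonomial x = (case x of (c,j,k) \<Rightarrow> if k \<le> j then (c, j-k) else (cnj c, k-j))"

lemma Re_zzbar_poly_eq_Re_hpoly:
  assumes z: "cmod z = 1"
  shows "Re (zzbar_poly xs z) = Re (hpoly (map circle_hmonomial xs) z)"
proof (induction xs)
  case (Cons x xs)
  obtain c j k where x: "x = (c,j,k)" by (cases x) auto
  have zz: "z * cnj z = 1" using z complex_norm_square[of z] by simp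
  have monomial: "Re (c * z^j * cnj z^k) = Re (fst (circle_hmonomial x) * z^(snd (circle_hmonomial x)))"
  proof (cases "k \<le> j")
    case True
    have "z^j = z^(j-k) * z^k" by (metis True le_add_diff_inverse2 power_add)
    then have "c * z^j * cnj z^k = c * z^(j-k) * (z * cnj z)^k" by (simp add: power_mult_distrib mult.assoc)
    then have eq: "c * z^j * cnj z^k = c * z^(j-k)" using zz by simp
    have "circle_hmonomial x = (c, j-k)" using True x by (simp add: circle_hmonomial_def)
    then show ?thesis by (simp only: eq fst_conv snd_conv)
  next
    case False
    have "cnj z^k = cnj z^(k-j) * cnj z^j" by (metis False nat_le_linear le_add_diff_inverse2 power_add)
    then have "c * z^j * cnj z^k = c * cnj z^(k-j) * (z * cnj z)^j"
      by (simp add: power_mult_distrib mult.assoc mult.left_commute)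
    then have eq: "c * z^j * cnj z^k = cnj (cnj c * z^(k-j))" using zz by simp
    have "circle_hmonomial x = (cnj c, k-j)" using False x by (simp add: circle_hmonomial_def)
    then show ?thesis by (simp only: eq fst_conv snd_conv complex_cnj_cnj cnj.sel(1))
  qed
  have "hpoly (map circle_hmonomial (x#xs)) z
      = fst (circle_hmonomial x) * z^(snd (circle_hmonomial x)) + hpoly (map circle_hmonomial xs) z"
    by (cases "circle_hmonomial x") simp
  then show ?case using Cons x monomial by simp
qed simp

lemma polynomial_function_eq_Re_hpoly_on_circle:
  fixes P :: "complex \<Rightarrow> real"
  assumes "polynomial_function P"
  shows "\<exists>ds. \<forall>z. cmod z = 1 \<longrightarrow> P z = Re (hpoly ds z)"
proof -
  have "real_polynomial_function P" using assms real_polynomial_function_eq by blast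
  then obtain xs where xs: "\<forall>z. complex_of_real (P z) = zzbar_poly xs z"
    using real_polynomial_function_zzbar_poly by blast
  have "P z = Re (hpoly (map circle_hmonomial xs) z)" if "cmod z = 1" for z
    using Re_zzbar_poly_eq_Re_hpoly[OF that, of xs] xs by (metis Re_complex_of_real)
  then show ?thesis by blast
qed

lemma hpoly_approx_on_circle:
  assumes "continuous_on (sphere 0 1) \<phi>" "0 < \<delta>"
  shows "\<exists>ds. \<forall>z. cmod z = 1 \<longrightarrow> \<phi> z \<le> Re (hpoly ds z) \<and> Re (hpoly ds z) \<le> \<phi> z + 2*\<delta>"
proof -
  have "continuous_on (sphere 0 1) (\<lambda>z. \<phi> z + \<delta>)" using assms(1) by (intro continuous_intros)
  then obtain P where P: "polynomial_function P" "\<forall>x\<in>sphere 0 1. norm ((\<phi> x + \<delta>) - P x) < \<delta>"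
    using Stone_Weierstrass_polynomial_function[OF compact_sphere _ \<open>0 < \<delta>\<close>] by blast
  obtain ds where ds: "\<forall>z. cmod z = 1 \<longrightarrow> P z = Re (hpoly ds z)"
    using polynomial_function_eq_Re_hpoly_on_circle[OF P(1)] by blast
  have "\<phi> z \<le> Re (hpoly ds z) \<and> Re (hpoly ds z) \<le> \<phi> z + 2*\<delta>" if "cmod z = 1" for z
  proof -
    have "\<bar>\<phi> z + \<delta> - P z\<bar> < \<delta>" using P(2) that by simp
    then show ?thesis using ds that by (auto simp: abs_less_iff)
  qed
  then show ?thesis by blast
qed

section \<open>Harmonic majorants on the unit circle\<close>

text \<open>A usc function \<open>f \<le> B\<close> on the unit circle is the pointwise decreasing limit of the
  \<open>k\<close>-Lipschitz sup-convolutions \<open>lip_reg f k\<close> of its truncations \<open>max f (-k)\<close>.\<close>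

definition clip :: "(complex \<Rightarrow> ereal) \<Rightarrow> nat \<Rightarrow> complex \<Rightarrow> real" where
  "clip f k y = real_of_ereal (max (f y) (ereal (- real k)))"

definition lip_reg :: "(complex \<Rightarrow> ereal) \<Rightarrow> nat \<Rightarrow> complex \<Rightarrow> real" where
  "lip_reg f k z = (SUP y\<in>sphere 0 1. clip f k y - real k * dist z y)"

context
  fixes f :: "complex \<Rightarrow> ereal" and B :: real
  assumes f_le_B: "\<forall>y\<in>sphere 0 1. f y \<le> ereal B" and B_nonneg: "0 \<le> B"
begin

lemma ereal_clip:
  assumes "y \<in> sphere 0 1" shows "ereal (clip f k y) = max (f y) (ereal (- real k))"
proof -
  have "max (f y) (ereal (- real k)) \<le> ereal B" using f_le_B[rule_format, OF assms] B_nonneg by auto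
  moreover have "ereal (- real k) \<le> max (f y) (ereal (- real k))" by simp
  ultimately have "\<bar>max (f y) (ereal (- real k))\<bar> \<noteq> \<infinity>" by (cases "max (f y) (ereal (- real k))") auto
  then show ?thesis unfolding clip_def by (rule ereal_real')
qed

lemma clip_bounds:
  assumes "y \<in> sphere 0 1"
  shows "clip f k y \<le> B" and "- real k \<le> clip f k y"
proof -
  have "ereal (clip f k y) \<le> ereal B" unfolding ereal_clip[OF assms] using f_le_B[rule_format, OF assms] B_nonneg by auto
  then show "clip f k y \<le> B" by simp
  have "ereal (- real k) \<le> ereal (clip f k y)" unfolding ereal_clip[OF assms] by simp
  then show "- real k \<le> clip f k y" by simp
qed

lemma lip_reg_upper:
  assumes "y \<in> sphere 0 1" shows "clip f k y - real k * dist z y \<le> lip_reg f k z"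
  unfolding lip_reg_def
proof (rule cSUP_upper[OF assms])
  show "bdd_above ((\<lambda>y. clip f k y - real k * dist z y) ` sphere 0 1)"
  proof (rule bdd_aboveI2)
    fix y assume "y \<in> sphere (0::complex) 1"
    moreover have "0 \<le> real k * dist z y" by simp
    ultimately show "clip f k y - real k * dist z y \<le> B" using clip_bounds(1)[of y k] by linarith
  qed
qed

lemma lip_reg_least:
  assumes "\<And>y. y \<in> sphere 0 1 \<Longrightarrow> clip f k y - real k * dist z y \<le> a"
  shows "lip_reg f k z \<le> a"
proof -
  have "(1::complex) \<in> sphere 0 1" by simp
  then have "sphere (0::complex) 1 \<noteq> {}" by blast
  then show ?thesis unfolding lip_reg_def using assms by (rule cSUP_least)
qed

lemma lip_reg_le_bound: "lip_reg f k z \<le> B"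
proof (rule lip_reg_least)
  fix y assume "y \<in> sphere (0::complex) 1"
  moreover have "0 \<le> real k * dist z y" by simp
  ultimately show "clip f k y - real k * dist z y \<le> B"
    using clip_bounds(1)[of y k] by linarith
qed

lemma lip_reg_on_circle:
  assumes "z \<in> sphere 0 1"
  shows "f z \<le> ereal (lip_reg f k z)" and "- real k \<le> lip_reg f k z"
proof -
  have le: "clip f k z \<le> lip_reg f k z" using lip_reg_upper[OF assms, of k z] by simp
  have "f z \<le> ereal (clip f k z)" using ereal_clip[OF assms, of k] by simp
  also have "\<dots> \<le> ereal (lip_reg f k z)" using le by simp
  finally show "f z \<le> ereal (lip_reg f k z)" .
  show "- real k \<le> lip_reg f k z" using le clip_bounds(2)[OF assms, of k] by linarith
qed

lemma lip_reg_lipschitz: "lip_reg f k z \<le> lip_reg f k w + real k * dist z w"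
proof (rule lip_reg_least)
  fix y assume y: "y \<in> sphere (0::complex) 1"
  have "dist w y - dist z w \<le> dist z y" using dist_triangle[of w y z] by (simp add: dist_commute)
  then have "real k * dist w y \<le> real k * dist z y + real k * dist z w"
    by (metis diff_le_eq distrib_left mult_left_mono of_nat_0_le_iff)
  moreover have "clip f k y - real k * dist w y \<le> lip_reg f k w" by (rule lip_reg_upper[OF y])
  ultimately show "clip f k y - real k * dist z y \<le> lip_reg f k w + real k * dist z w" by linarith
qed

lemma continuous_on_lip_reg: "continuous_on A (lip_reg f k)"
proof (rule lipschitz_on_continuous_on)
  show "lipschitz_on (real k) A (lip_reg f k)"
  proof (rule lipschitz_onI)
    fix x y
    show "dist (lip_reg f k x) (lip_reg f k y) \<le> real k * dist x y"
      using lip_reg_lipschitz[of k x y] lip_reg_lipschitz[of k y x]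
      by (simp add: dist_real_def dist_commute abs_le_iff)
  qed simp
qed

lemma lip_reg_Suc_le: "lip_reg f (Suc k) z \<le> lip_reg f k z"
proof (rule lip_reg_least)
  fix y assume y: "y \<in> sphere (0::complex) 1"
  have "ereal (clip f (Suc k) y) \<le> ereal (clip f k y)"
    unfolding ereal_clip[OF y] by (rule max.mono) auto
  moreover have "real k * dist z y \<le> real (Suc k) * dist z y" by (intro mult_right_mono) auto
  moreover have "clip f k y - real k * dist z y \<le> lip_reg f k z" by (rule lip_reg_upper[OF y])
  ultimately show "clip f (Suc k) y - real (Suc k) * dist z y \<le> lip_reg f k z" by simp
qed

lemma lip_reg_eventually_below:
  assumes usc: "usc_on S f" and "sphere 0 1 \<subseteq> S" and z: "z \<in> sphere 0 1" and "f z < ereal a"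
  shows "\<exists>k. lip_reg f k z \<le> a"
proof -
  obtain T where T: "open T" "z \<in> T" "\<forall>y\<in>T\<inter>S. f y < ereal a"
    using usc_onD[OF usc _ \<open>f z < ereal a\<close>] assms(2) z by blast
  obtain \<delta> where \<delta>: "\<delta> > 0" "ball z \<delta> \<subseteq> T" using T(1,2) open_contains_ball by blast
  obtain k :: nat where k: "real k \<ge> max (- a) ((B - a) / \<delta>)" using real_arch_simple by blast
  have "lip_reg f k z \<le> a"
  proof (rule lip_reg_least)
    fix y assume y: "y \<in> sphere (0::complex) 1"
    show "clip f k y - real k * dist z y \<le> a"
    proof (cases "dist z y < \<delta>")
      case True
      then have "y \<in> T \<inter> S" using \<delta>(2) y assms(2) by auto
      then have "f y < ereal a" using T(3) by blast
      moreover have "ereal (- real k) \<le> ereal a" using k by simp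
      ultimately have "clip f k y \<le> a" using ereal_clip[OF y, of k] by (simp flip: ereal_less_eq(3))
      moreover have "0 \<le> real k * dist z y" by simp
      ultimately show ?thesis by linarith
    next
      case False
      have "B - a \<le> real k * \<delta>" using k \<delta>(1) by (simp add: field_simps)
      also have "\<dots> \<le> real k * dist z y" using False by (intro mult_left_mono) auto
      finally show ?thesis using clip_bounds(1)[OF y, of k] by linarith
    qed
  qed
  then show ?thesis by blast
qed

lemma SUP_lip_reg_deficit:
  assumes usc: "usc_on S f" and "sphere 0 1 \<subseteq> S" and z: "z \<in> sphere 0 1"
  shows "(SUP k. e2ennreal (ereal B - ereal (lip_reg f k z))) = e2ennreal (ereal B - f z)"
proof (rule antisym)
  show "(SUP k. e2ennreal (ereal B - ereal (lip_reg f k z))) \<le> e2ennreal (ereal B - f z)"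
    by (intro SUP_least e2ennreal_mono ereal_minus_mono) (auto intro: lip_reg_on_circle(1)[OF z])
next
  define M where "M = (SUP k. e2ennreal (ereal B - ereal (lip_reg f k z)))"
  show "e2ennreal (ereal B - f z) \<le> M"
  proof (rule ccontr)
    assume "\<not> e2ennreal (ereal B - f z) \<le> M"
    then have less: "M < e2ennreal (ereal B - f z)" by simp
    then have "M \<noteq> top" by auto
    then obtain s where s: "M = ennreal s" "0 \<le> s" by (metis ennreal_cases)
    have "\<exists>a. f z < ereal a \<and> s < B - a"
    proof (cases "f z")
      case (real r)
      then have "s < B - r" using less s by (simp add: ennreal_less_iff)
      then show ?thesis using real by (intro exI[of _ "(r + B - s)/2"]) (auto simp: field_simps)
    next
      case MInf then show ?thesis by (intro exI[of _ "B - s - 1"]) auto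
    qed (use f_le_B[rule_format, OF z] in simp)
    then obtain a where a: "f z < ereal a" "s < B - a" by blast
    obtain k where k: "lip_reg f k z \<le> a" using lip_reg_eventually_below[OF usc assms(2) z a(1)] by blast
    have "ennreal s < ennreal (B - a)" using a(2) s(2) by (simp add: ennreal_less_iff)
    also have "\<dots> \<le> e2ennreal (ereal B - ereal (lip_reg f k z))"
      using k by (simp add: ennreal_leI)
    also have "\<dots> \<le> M" unfolding M_def by (rule SUP_upper) simp
    finally show False using s by simp
  qed
qed

lemma SUP_lip_reg_deficit_integral:
  assumes usc: "usc_on S f" and S: "sphere 0 1 \<subseteq> S"
  shows "(SUP k. \<integral>\<^sup>+ t. e2ennreal (ereal B - ereal (lip_reg f k (cis t))) * indicator {0..2*pi} t \<partial>lborel)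
    = (\<integral>\<^sup>+ t. e2ennreal (ereal B - f (cis t)) * indicator {0..2*pi} t \<partial>lborel)"
proof -
  have meas: "(\<lambda>t. lip_reg f k (cis t)) \<in> borel_measurable borel" for k
    by (intro borel_measurable_continuous_onI continuous_on_compose2[OF continuous_on_lip_reg])
       (auto intro: continuous_intros)
  have "incseq (\<lambda>k t. e2ennreal (ereal B - ereal (lip_reg f k (cis t))) * indicator {0..2*pi} t)"
  proof (rule incseq_SucI, rule le_funI)
    fix k t
    have "ereal B - ereal (lip_reg f k (cis t)) \<le> ereal B - ereal (lip_reg f (Suc k) (cis t))"
      using lip_reg_Suc_le[where k=k and z="cis t"] by simp
    then show "e2ennreal (ereal B - ereal (lip_reg f k (cis t))) * indicator {0..2*pi} t
        \<le> e2ennreal (ereal B - ereal (lip_reg f (Suc k) (cis t))) * (indicator {0..2*pi} t :: ennreal)"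
      by (intro mult_right_mono e2ennreal_mono) auto
  qed
  then have "(SUP k. \<integral>\<^sup>+ t. e2ennreal (ereal B - ereal (lip_reg f k (cis t))) * indicator {0..2*pi} t \<partial>lborel)
      = (\<integral>\<^sup>+ t. (SUP k. e2ennreal (ereal B - ereal (lip_reg f k (cis t))) * indicator {0..2*pi} t) \<partial>lborel)"
    by (rule nn_integral_monotone_convergence_SUP[symmetric]) (use meas in auto)
  also have "\<dots> = (\<integral>\<^sup>+ t. e2ennreal (ereal B - f (cis t)) * indicator {0..2*pi} t \<partial>lborel)"
  proof (rule nn_integral_cong)
    fix t
    have "cis t \<in> sphere 0 1" by simp
    then show "(SUP k. e2ennreal (ereal B - ereal (lip_reg f k (cis t))) * indicator {0..2*pi} t)
        = e2ennreal (ereal B - f (cis t)) * (indicator {0..2*pi} t :: ennreal)"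
      using SUP_lip_reg_deficit[OF usc S] by (cases "t \<in> {0..2*pi}") auto
  qed
  finally show ?thesis .
qed

lemma lip_reg_circle_avg_less:
  assumes usc: "usc_on S f" and S: "sphere 0 1 \<subseteq> S" and less: "circle_avg (\<lambda>t. f (cis t)) < ereal c"
  shows "\<exists>k. circle_avg (\<lambda>t. ereal (lip_reg f k (cis t))) < ereal c"
proof -
  define I where "I = (indicator {0..2*pi} :: real \<Rightarrow> ennreal)"
  define Q where "Q = (\<integral>\<^sup>+ t. e2ennreal (ereal B - f (cis t)) * I t \<partial>lborel)"
  define Qk where "Qk k = (\<integral>\<^sup>+ t. e2ennreal (ereal B - ereal (lip_reg f k (cis t))) * I t \<partial>lborel)" for k
  have avg_less_iff: "ereal B - enn2ereal X / ereal (2*pi) < ereal c \<longleftrightarrow> ereal (2*pi*(B - c)) < enn2ereal X"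
    for X :: ennreal
    by (cases "enn2ereal X") (auto simp: field_simps)
  have "(\<lambda>t. f (cis t)) \<in> borel_measurable borel"
    using S by (intro usc_on_UNIV_borel_measurable usc_on_compose[OF usc _ open_UNIV])
      (auto intro: continuous_intros)
  then have avg: "circle_avg (\<lambda>t. f (cis t)) = ereal B - enn2ereal Q / ereal (2*pi)"
    unfolding Q_def I_def by (rule circle_avg_eq_bound_minus[OF _ _ B_nonneg]) (use f_le_B in auto)
  have avg_k: "circle_avg (\<lambda>t. ereal (lip_reg f k (cis t))) = ereal B - enn2ereal (Qk k) / ereal (2*pi)" for k
    unfolding Qk_def I_def
    by (rule circle_avg_eq_bound_minus[OF _ _ B_nonneg])
       (auto intro!: borel_measurable_continuous_onI continuous_on_compose2[OF continuous_on_lip_reg]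
          continuous_intros lip_reg_le_bound)
  show ?thesis
  proof (cases "B < c")
    case True
    then have "ereal (2*pi*(B - c)) < 0" by (simp add: mult_pos_neg)
    then have "ereal (2*pi*(B - c)) < enn2ereal (Qk 0)"
      using enn2ereal_nonneg by (rule less_le_trans)
    then have "circle_avg (\<lambda>t. ereal (lip_reg f 0 (cis t))) < ereal c"
      using avg_k[of 0] avg_less_iff[of "Qk 0"] by simp
    then show ?thesis by blast
  next
    case False
    have "ereal (2*pi*(B - c)) < enn2ereal Q" using less avg avg_less_iff by simp
    then have "ennreal (2*pi*(B - c)) < (SUP k. Qk k)"
      using False SUP_lip_reg_deficit_integral[OF usc S]
      by (simp add: less_ennreal.rep_eq Q_def Qk_def I_def)
    then obtain k where "ennreal (2*pi*(B - c)) < Qk k" by (auto simp: less_SUP_iff)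
    then have "ereal (2*pi*(B - c)) < enn2ereal (Qk k)" using False by (simp add: less_ennreal.rep_eq)
    then have "circle_avg (\<lambda>t. ereal (lip_reg f k (cis t))) < ereal c"
      using avg_k[of k] avg_less_iff[of "Qk k"] by simp
    then show ?thesis by blast
  qed
qed

end

text \<open>Approximate \<open>f\<close> from above by a continuous \<open>lip_reg f k\<close> of small mean, then that
  by a polynomial (Stone-Weierstrass), which on the circle is the real part of a holomorphic one.\<close>

lemma hpoly_majorant_on_circle:
  fixes f :: "complex \<Rightarrow> ereal"
  assumes usc: "usc_on S f" and S: "sphere 0 1 \<subseteq> S" and fin: "\<And>z. z \<in> S \<Longrightarrow> f z < \<infinity>"
    and less: "circle_avg (\<lambda>t. f (cis t)) < ereal c"
  shows "\<exists>ds. (\<forall>z. cmod z = 1 \<longrightarrow> f z \<le> ereal (Re (hpoly ds z))) \<and> Re (hpoly ds 0) < c"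
proof -
  obtain B where B: "B \<ge> 0" "\<forall>x\<in>sphere 0 1. f x \<le> ereal B"
    using usc_on_bounded_above[OF usc compact_sphere S] fin S by blast
  obtain k where "circle_avg (\<lambda>t. ereal (lip_reg f k (cis t))) < ereal c"
    using lip_reg_circle_avg_less[OF B(2) B(1) usc S less] by blast
  then obtain a where a: "circle_avg (\<lambda>t. ereal (lip_reg f k (cis t))) < ereal a" "a < c"
    using ereal_dense2 by force
  define \<delta> where "\<delta> = (c - a) / 4"
  have "0 < \<delta>" unfolding \<delta>_def using a(2) by simp
  then obtain ds where ds: "\<forall>z. cmod z = 1 \<longrightarrow> lip_reg f k z \<le> Re (hpoly ds z) \<and> Re (hpoly ds z) \<le> lip_reg f k z + 2*\<delta>"
    using hpoly_approx_on_circle[OF continuous_on_lip_reg[OF B(2) B(1)]] by blast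
  have "f z \<le> ereal (Re (hpoly ds z))" if "cmod z = 1" for z
  proof -
    have "f z \<le> ereal (lip_reg f k z)" using lip_reg_on_circle(1)[OF B(2) B(1)] that by simp
    also have "\<dots> \<le> ereal (Re (hpoly ds z))" using ds that by simp
    finally show ?thesis .
  qed
  moreover have "ereal (Re (hpoly ds 0)) < ereal c"
  proof -
    have "ereal (Re (hpoly ds 0)) = circle_avg (\<lambda>t. ereal (Re (hpoly ds (0 + cis t * 1))))"
      using circle_avg_Re_hpoly_dip[of ds 0 1 0 0] by simp
    also have "\<dots> \<le> circle_avg (\<lambda>t. ereal (lip_reg f k (cis t)) + ereal (2*\<delta>))"
      using ds by (intro circle_avg_mono) simp
    also have "\<dots> = circle_avg (\<lambda>t. ereal (lip_reg f k (cis t))) + ereal (2*\<delta>)"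
      using lip_reg_le_bound[OF B(2) B(1)]
      by (intro circle_avg_add_const borel_measurable_continuous_onI continuous_on_compose2[OF continuous_on_lip_reg[OF B(2) B(1)]]
          continuous_intros) auto
    also have "\<dots> < ereal (a + 2*\<delta>)"
      using a(1) by (cases "circle_avg (\<lambda>t. ereal (lip_reg f k (cis t)))") auto
    also have "a + 2*\<delta> < c" unfolding \<delta>_def using a(2) by (simp add: field_simps)
    finally show ?thesis by simp
  qed
  ultimately show ?thesis by auto
qed

section \<open>From local to global sub-mean value inequalities\<close>

lemma usc_on_superlevel_compact:
  fixes g :: "'a::topological_space \<Rightarrow> ereal"
  assumes usc: "usc_on S g" and "compact K" "K \<subseteq> S"
  shows "compact {z\<in>K. c \<le> g z}"
proof -
  define Low where "Low = \<Union>{T. open T \<and> (\<forall>y\<in>T\<inter>S. g y < c)}"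
  have "{z\<in>K. c \<le> g z} = K - Low"
  proof (intro set_eqI iffI)
    fix z assume "z \<in> {z\<in>K. c \<le> g z}"
    then show "z \<in> K - Low" using \<open>K \<subseteq> S\<close> unfolding Low_def by (auto simp: not_less[symmetric])
  next
    fix z assume z: "z \<in> K - Low"
    have "\<not> g z < c"
    proof
      assume "g z < c"
      then obtain T where "open T" "z \<in> T" "\<forall>y\<in>T\<inter>S. g y < c"
        using usc_onD[OF usc] z \<open>K \<subseteq> S\<close> by blast
      then have "z \<in> Low" unfolding Low_def by blast
      then show False using z by blast
    qed
    then show "z \<in> {z\<in>K. c \<le> g z}" using z by (simp add: not_less)
  qed
  moreover have "open Low" unfolding Low_def by auto
  ultimately show ?thesis using compact_diff[OF \<open>compact K\<close>] by simp
qed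

lemma norm_less_on_outward_arc:
  fixes p u :: complex
  assumes u: "cmod u = 1" and p: "p = of_real (cmod p) * u" and "0 < \<rho>" and t: "t \<in> {0..pi/3}"
  shows "cmod p < cmod (p + cis t * (of_real \<rho> * u))"
proof -
  have "p + cis t * (of_real \<rho> * u) = u * (of_real (cmod p) + cis t * of_real \<rho>)"
    by (subst p) (simp add: algebra_simps)
  then have "cmod (p + cis t * (of_real \<rho> * u)) = cmod (of_real (cmod p) + cis t * of_real \<rho>)"
    using u by (simp add: norm_mult)
  also have "\<dots> \<ge> Re (of_real (cmod p) + cis t * of_real \<rho>)" by (rule complex_Re_le_cmod)
  finally have "cmod p + \<rho> * cos t \<le> cmod (p + cis t * (of_real \<rho> * u))" by (simp add: mult.commute)
  moreover have "cos (pi/3) \<le> cos t" using t by (intro cos_monotone_0_pi_le) auto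
  then have "0 < \<rho> * cos t" using \<open>0 < \<rho>\<close> by (simp add: cos_60)
  ultimately show ?thesis by linarith
qed

lemma outward_circle_in_disc:
  fixes p :: complex
  assumes "cmod p < 1" "0 < r"
  shows "\<exists>\<beta>. cmod \<beta> < r \<and> (\<forall>t. cmod (p + cis t * \<beta>) \<le> 1)
    \<and> (\<forall>t\<in>{0..pi/3}. cmod p < cmod (p + cis t * \<beta>))"
proof -
  define u where "u = (if p = 0 then 1 else p / of_real (cmod p))"
  have u: "cmod u = 1" "p = of_real (cmod p) * u" unfolding u_def by (auto simp: norm_divide)
  define \<rho> where "\<rho> = min (r/2) ((1 - cmod p)/2)"
  have \<rho>: "0 < \<rho>" "\<rho> < r" "cmod p + \<rho> < 1"
    unfolding \<rho>_def using assms by (auto simp: min_def field_simps)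
  have norm_\<beta>: "cmod (cis t * (of_real \<rho> * u)) = \<rho>" for t using u \<rho> by (simp add: norm_mult)
  then have "cmod (p + cis t * (of_real \<rho> * u)) \<le> 1" for t
    using norm_triangle_ineq[of p "cis t * (of_real \<rho> * u)"] \<rho> by simp
  moreover have "cmod (of_real \<rho> * u) < r" using norm_\<beta>[of 0] \<rho> by simp
  ultimately show ?thesis
    using norm_less_on_outward_arc[OF u \<rho>(1)] by (intro exI[of _ "of_real \<rho> * u"]) auto
qed

lemma usc_on_compact_strict_bound:
  assumes usc: "usc_on S g" and "compact C" "C \<subseteq> S" and less: "\<And>y. y \<in> C \<Longrightarrow> g y < ereal m"
  shows "\<exists>m'<m. \<forall>y\<in>C. g y \<le> ereal m'"
proof (cases "C = {}")
  case False
  then obtain y1 where y1: "y1 \<in> C" "\<forall>y\<in>C. g y \<le> g y1"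
    using usc_on_attains_max[OF usc \<open>compact C\<close> \<open>C \<subseteq> S\<close>] by blast
  obtain m' where "g y1 < ereal m'" "m' < m" using ereal_dense2[OF less[OF y1(1)]] by auto
  then show ?thesis using y1(2) by (intro exI[of _ m']) force
qed (auto intro: exI[of _ "m - 1"])

lemma usc_on_farthest_max_point:
  fixes g :: "'a::real_normed_vector \<Rightarrow> ereal"
  assumes usc: "usc_on S g" and K: "compact K" "K \<subseteq> S" "K \<noteq> {}"
  shows "\<exists>p\<in>K. (\<forall>y\<in>K. g y \<le> g p) \<and> (\<forall>z\<in>K. g z = g p \<longrightarrow> norm z \<le> norm p)"
proof -
  obtain x0 where x0: "x0 \<in> K" "\<forall>y\<in>K. g y \<le> g x0" using usc_on_attains_max[OF usc K] by blast
  define A where "A = {z\<in>K. g x0 \<le> g z}"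
  have "compact A" unfolding A_def by (rule usc_on_superlevel_compact[OF usc K(1,2)])
  moreover have "x0 \<in> A" using x0 by (simp add: A_def)
  ultimately obtain p where p: "p \<in> A" "\<forall>z\<in>A. norm z \<le> norm p"
    using continuous_attains_sup[of A norm] by (auto intro: continuous_intros)
  then have "g p = g x0" using x0(2) by (auto simp: A_def intro: antisym)
  then show ?thesis using p x0(2) by (intro bexI[of _ p]) (auto simp: A_def)
qed

text \<open>If \<open>f - h\<close> had a positive maximum \<open>m\<close> on the closed disc, let \<open>p\<close> be a point of largest
  modulus where it is attained: \<open>p\<close> is interior, and on a small circle around \<open>p\<close> the arc
  pointing away from the origin stays below some \<open>m' < m\<close>.  The mean of \<open>f - h\<close> over that
  circle is then \<open>< m\<close>, contradicting the sub-mean value inequality for \<open>f\<close> and the mean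
  value property of \<open>h\<close>.\<close>

lemma hpoly_max_principle:
  fixes f :: "complex \<Rightarrow> ereal"
  assumes S: "open S" "cball 0 1 \<subseteq> S" and usc: "usc_on S f" and fin: "\<And>z. z \<in> S \<Longrightarrow> f z < \<infinity>"
    and loc: "\<And>p. p \<in> S \<Longrightarrow> \<exists>r>0. \<forall>\<beta>. cmod \<beta> < r \<longrightarrow> f p \<le> circle_avg (\<lambda>t. f (p + cis t * \<beta>))"
    and bnd: "\<And>z. cmod z = 1 \<Longrightarrow> f z \<le> ereal (Re (hpoly ds z))"
  shows "f 0 \<le> ereal (Re (hpoly ds 0))"
proof (rule ccontr)
  assume contra: "\<not> ?thesis"
  define h where "h z = Re (hpoly ds z)" for z
  define g where "g z = f z - ereal (h z)" for z
  have f_le: "f z \<le> ereal (h z + a)" if "g z \<le> ereal a" for z a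
    using that unfolding g_def by (cases "f z") auto
  define K where "K = cball (0::complex) 1"
  have K: "compact K" "K \<subseteq> S" "K \<noteq> {}" "0 \<in> K" using S by (auto simp: K_def)
  have usc_g: "usc_on S g"
    unfolding g_def h_def by (rule usc_on_diff_continuous[OF usc fin continuous_on_Re_hpoly S(1)])
  obtain p where p: "p \<in> K" "\<forall>y\<in>K. g y \<le> g p" "\<forall>z\<in>K. g z = g p \<longrightarrow> norm z \<le> norm p"
    using usc_on_farthest_max_point[OF usc_g K(1-3)] by blast
  have "0 < g 0" using contra fin[of 0] K by (cases "f 0") (auto simp: g_def h_def)
  moreover have "g p < \<infinity>" using fin[of p] p(1) K(2) by (cases "f p") (auto simp: g_def)
  moreover have "g 0 \<le> g p" using p(2) K(4) by blast
  ultimately obtain m where m: "g p = ereal m" "0 < m"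
    by (cases "g p") (auto dest: less_le_trans)
  have "norm p < 1"
  proof (rule ccontr)
    assume "\<not> norm p < 1"
    then have "cmod p = 1" using p(1) by (simp add: K_def)
    then have "g p \<le> 0" using bnd[of p] unfolding g_def h_def by (cases "f p") auto
    then show False using m by simp
  qed
  obtain r where r: "r > 0" "\<forall>\<beta>. cmod \<beta> < r \<longrightarrow> f p \<le> circle_avg (\<lambda>t. f (p + cis t * \<beta>))"
    using loc p(1) K(2) by blast
  obtain \<beta> where \<beta>: "cmod \<beta> < r" "\<And>t. cmod (p + cis t * \<beta>) \<le> 1"
      "\<And>t. t \<in> {0..pi/3} \<Longrightarrow> cmod p < cmod (p + cis t * \<beta>)"
    using outward_circle_in_disc[OF \<open>norm p < 1\<close> r(1)] by blast
  define q where "q t = p + cis t * \<beta>" for t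
  have qK: "q t \<in> K" for t using \<beta>(2) by (simp add: q_def K_def)
  have "g (q t) < ereal m" if "t \<in> {0..pi/3}" for t
    using p(2,3) qK[of t] m(1) \<beta>(3)[OF that] by (metis antisym_conv2 not_le q_def)
  moreover have "compact (q ` {0..pi/3})"
    by (rule compact_continuous_image) (auto simp: q_def intro!: continuous_intros)
  ultimately obtain m' where m': "m' < m" "\<forall>t\<in>{0..pi/3}. g (q t) \<le> ereal m'"
    using usc_on_compact_strict_bound[OF usc_g, of "q ` {0..pi/3}" m] qK K(2) by blast
  have f_q: "f (q t) \<le> ereal (h (q t) + m - (m - m') * indicator {0..pi/3} t)" for t
    using f_le[OF m'(2)[rule_format]] f_le[of "q t" m] p(2) qK m(1) by (auto simp: indicator_def)
  have "f p \<le> circle_avg (\<lambda>t. f (q t))" using r(2) \<beta>(1) unfolding q_def by blast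
  also have "\<dots> \<le> circle_avg (\<lambda>t. ereal (h (q t) + m - (m - m') * indicator {0..pi/3} t))"
    using f_q by (rule circle_avg_mono)
  also have "\<dots> = ereal (h p + m - (m - m') / 6)"
    unfolding q_def h_def by (rule circle_avg_Re_hpoly_dip)
  finally have "f p \<le> ereal (h p + m - (m - m') / 6)" .
  moreover have "f p = ereal (h p + m)" using m(1) unfolding g_def by (cases "f p") auto
  ultimately show False using m'(1) by simp
qed

lemma submean_of_local_submean:
  fixes f :: "complex \<Rightarrow> ereal"
  assumes S: "open S" "cball 0 1 \<subseteq> S" and usc: "usc_on S f" and fin: "\<And>z. z \<in> S \<Longrightarrow> f z < \<infinity>"
    and loc: "\<And>p. p \<in> S \<Longrightarrow> \<exists>r>0. \<forall>\<beta>. cmod \<beta> < r \<longrightarrow> f p \<le> circle_avg (\<lambda>t. f (p + cis t * \<beta>))"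
  shows "f 0 \<le> circle_avg (\<lambda>t. f (cis t))"
proof (rule ccontr)
  assume "\<not> ?thesis"
  then have "circle_avg (\<lambda>t. f (cis t)) < f 0" by simp
  then obtain c where c: "circle_avg (\<lambda>t. f (cis t)) < ereal c" "ereal c < f 0"
    using ereal_dense2 by blast
  have "sphere 0 1 \<subseteq> S" using S(2) by auto
  then obtain ds where ds: "\<forall>z. cmod z = 1 \<longrightarrow> f z \<le> ereal (Re (hpoly ds z))" "Re (hpoly ds 0) < c"
    using hpoly_majorant_on_circle[OF usc _ fin c(1)] by blast
  have "f 0 \<le> ereal (Re (hpoly ds 0))"
    using ds(1) by (intro hpoly_max_principle[OF S usc fin loc]) auto
  also have "\<dots> < ereal c" using ds(2) by simp
  finally show False using c(2) by simp
qed

lemma psh_of_local_submean: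
  fixes w :: "complex^'n \<Rightarrow> ereal"
  assumes "open \<Omega>" and usc: "usc_on \<Omega> w" and fin: "\<And>z. z \<in> \<Omega> \<Longrightarrow> w z < \<infinity>"
    and loc: "\<And>x. x \<in> \<Omega> \<Longrightarrow> \<exists>r>0. \<forall>b. norm b < r \<longrightarrow> w x \<le> circle_mean w x b"
  shows "psh \<Omega> w"
  unfolding psh_def
proof (intro conjI assms ballI allI impI)
  fix a b :: "complex^'n"
  assume disc: "\<forall>\<zeta>::complex. cmod \<zeta> \<le> 1 \<longrightarrow> (\<chi> i. a $ i + \<zeta> * b $ i) \<in> \<Omega>"
  define L where "L \<zeta> = ((\<chi> i. a $ i + \<zeta> * b $ i) :: complex^'n)" for \<zeta>
  have cont_L: "continuous_on A L" for A unfolding L_def by (intro continuous_on_vec_lambda continuous_intros)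
  define S where "S = L -` \<Omega>"
  have "open S"
    using continuous_on_open_vimage[OF open_UNIV, THEN iffD1, OF cont_L, rule_format, OF \<open>open \<Omega>\<close>]
    by (simp add: S_def)
  have "cball 0 1 \<subseteq> S" unfolding S_def L_def using disc by auto
  define f where "f \<zeta> = w (L \<zeta>)" for \<zeta>
  have usc_f: "usc_on S f" unfolding f_def by (rule usc_on_compose[OF usc cont_L \<open>open S\<close>]) (auto simp: S_def)
  have fin_f: "f z < \<infinity>" if "z \<in> S" for z using fin that unfolding f_def S_def by auto
  have circ: "circ_pt (L p) (\<chi> i. \<beta> * b $ i) t = L (p + cis t * \<beta>)" for p \<beta> t
    unfolding circ_pt_def L_def by (simp add: vec_eq_iff algebra_simps)
  have "\<exists>r>0. \<forall>\<beta>. cmod \<beta> < r \<longrightarrow> f p \<le> circle_avg (\<lambda>t. f (p + cis t * \<beta>))" if "p \<in> S" for p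
  proof -
    obtain r where r: "r > 0" "\<forall>b'. norm b' < r \<longrightarrow> w (L p) \<le> circle_mean w (L p) b'"
      using loc \<open>p \<in> S\<close> unfolding S_def by blast
    have nb: "0 < norm b + 1" using norm_ge_zero[of b] by linarith
    have "f p \<le> circle_avg (\<lambda>t. f (p + cis t * \<beta>))" if "cmod \<beta> < r / (norm b + 1)" for \<beta>
    proof -
      have "cmod \<beta> * norm b \<le> cmod \<beta> * (norm b + 1)" by (simp add: mult_left_mono)
      also have "\<dots> < r" using that nb by (simp add: pos_less_divide_eq)
      finally have "norm (\<chi> i. \<beta> * b $ i) < r" by (simp add: norm_vec_cmult)
      then have "w (L p) \<le> circle_mean w (L p) (\<chi> i. \<beta> * b $ i)" using r(2) by blast
      then show ?thesis unfolding circle_mean_eq_circle_avg circ f_def .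
    qed
    moreover have "r / (norm b + 1) > 0" using r(1) nb by simp
    ultimately show ?thesis by blast
  qed
  then have "f 0 \<le> circle_avg (\<lambda>t. f (cis t))"
    by (intro submean_of_local_submean[OF \<open>open S\<close> \<open>cball 0 1 \<subseteq> S\<close> usc_f fin_f]) auto
  moreover have "f 0 = w a" "circle_avg (\<lambda>t. f (cis t)) = circle_mean w a b"
    unfolding f_def L_def circle_mean_eq_circle_avg circ_pt_def by (simp_all add: vec_eq_iff)
  ultimately show "w a \<le> circle_mean w a b" by simp
qed

section \<open>Plurisubharmonic functions\<close>

lemma psh_subset: "psh \<Omega> v \<Longrightarrow> open \<Omega>' \<Longrightarrow> \<Omega>' \<subseteq> \<Omega> \<Longrightarrow> psh \<Omega>' v"
  unfolding psh_def by (meson subset_iff usc_on_subset)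

lemma psh_submean:
  assumes "psh \<Omega> u" "\<And>\<zeta>. cmod \<zeta> \<le> 1 \<Longrightarrow> (\<chi> i. a $ i + \<zeta> * b $ i) \<in> \<Omega>"
  shows "u a \<le> circle_mean u a b"
  using assms unfolding psh_def by blast

lemma psh_submean_le:
  assumes "psh \<Omega> v" "ball x r \<subseteq> \<Omega>" "norm b < r" "\<And>y. y \<in> \<Omega> \<Longrightarrow> v y \<le> w y"
  shows "v x \<le> circle_mean w x b"
proof -
  have disc: "(\<chi> i. x $ i + \<zeta> * b $ i) \<in> \<Omega>" if "cmod \<zeta> \<le> 1" for \<zeta>
    using disc_pt_in_ball[OF assms(3) that] assms(2) by blast
  have "v x \<le> circle_mean v x b" by (rule psh_submean[OF assms(1) disc])
  also have "\<dots> \<le> circle_mean w x b"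
    unfolding circle_mean_eq_circle_avg using disc assms(4) by (intro circle_avg_mono) (simp add: circ_pt_def)
  finally show ?thesis .
qed

lemma psh_circle_bounds:
  fixes u :: "complex^'n \<Rightarrow> ereal"
  assumes "psh \<Omega> u" "\<And>\<zeta>. cmod \<zeta> \<le> 1 \<Longrightarrow> (\<chi> i. a $ i + \<zeta> * b $ i) \<in> \<Omega>"
  shows "(\<lambda>t. u (circ_pt a b t)) \<in> borel_measurable borel" and "\<exists>B\<ge>0. \<forall>t. u (circ_pt a b t) \<le> ereal B"
proof -
  have usc: "usc_on \<Omega> u" and fin: "\<And>z. z \<in> \<Omega> \<Longrightarrow> u z < \<infinity>" using assms(1) unfolding psh_def by auto
  show "(\<lambda>t. u (circ_pt a b t)) \<in> borel_measurable borel"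
    by (rule usc_on_circ_pt_measurable[OF usc]) (simp add: circ_pt_def assms(2))
  show "\<exists>B\<ge>0. \<forall>t. u (circ_pt a b t) \<le> ereal B"
    by (rule usc_on_circ_pt_bounded_above[OF usc _ fin]) (simp add: assms(2))
qed

lemma psh_cmult_diff_const:
  fixes u :: "complex^'n \<Rightarrow> ereal"
  assumes psh: "psh \<Omega> u" and e: "0 < e"
  shows "psh \<Omega> (\<lambda>x. ereal e * (u x - ereal c))"
  unfolding psh_def
proof (intro conjI ballI allI impI)
  have usc: "usc_on \<Omega> u" and fin: "\<And>z. z \<in> \<Omega> \<Longrightarrow> u z < \<infinity>" and "open \<Omega>"
    using psh unfolding psh_def by auto
  then show "open \<Omega>" "usc_on \<Omega> (\<lambda>x. ereal e * (u x - ereal c))"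
    using usc_on_cmult_diff[OF usc fin e] by auto
  show "ereal e * (u z - ereal c) < \<infinity>" if "z \<in> \<Omega>" for z
    using fin[OF that] e by (cases "u z") auto
  fix a b :: "complex^'n"
  assume disc: "\<forall>\<zeta>::complex. cmod \<zeta> \<le> 1 \<longrightarrow> (\<chi> i. a $ i + \<zeta> * b $ i) \<in> \<Omega>"
  obtain B where B: "\<forall>t. u (circ_pt a b t) \<le> ereal B" using psh_circle_bounds(2)[OF psh] disc by blast
  have meas: "(\<lambda>t. u (circ_pt a b t)) \<in> borel_measurable borel" using psh_circle_bounds(1)[OF psh] disc by blast
  have "circle_mean (\<lambda>x. ereal e * (u x - ereal c)) a b
      = circle_avg (\<lambda>t. ereal e * (u (circ_pt a b t) + ereal (- c)))"
    unfolding circle_mean_eq_circle_avg by (simp add: minus_ereal_def)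
  also have "\<dots> = ereal e * circle_avg (\<lambda>t. u (circ_pt a b t) + ereal (- c))"
  proof (rule circle_avg_cmult[OF _ _ e])
    show "(\<lambda>t. u (circ_pt a b t) + ereal (- c)) \<in> borel_measurable borel" using meas by measurable
    show "u (circ_pt a b t) + ereal (- c) \<le> ereal (B - c)" for t
      using B[rule_format, of t] by (cases "u (circ_pt a b t)") auto
  qed
  also have "circle_avg (\<lambda>t. u (circ_pt a b t) + ereal (- c)) = circle_mean u a b + ereal (- c)"
    unfolding circle_mean_eq_circle_avg using B by (intro circle_avg_add_const[OF meas]) blast
  finally have mean: "circle_mean (\<lambda>x. ereal e * (u x - ereal c)) a b = ereal e * (circle_mean u a b + ereal (- c))" .
  have "u a + ereal (- c) \<le> circle_mean u a b + ereal (- c)"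
    using psh_submean[OF psh] disc by (intro add_right_mono) blast
  then have "ereal e * (u a + ereal (- c)) \<le> ereal e * (circle_mean u a b + ereal (- c))"
    using e by (intro ereal_mult_left_mono) auto
  then show "ereal e * (u a - ereal c) \<le> circle_mean (\<lambda>x. ereal e * (u x - ereal c)) a b"
    unfolding mean by (simp add: minus_ereal_def)
qed

lemma psh_diff_const: "psh \<Omega> u \<Longrightarrow> psh \<Omega> (\<lambda>x. u x - ereal c)"
  using psh_cmult_diff_const[of \<Omega> u 1 c] by (simp add: one_ereal_def[symmetric])

lemma psh_glue:
  fixes \<phi> \<psi> :: "complex^'n \<Rightarrow> ereal"
  assumes psi: "psh D \<psi>" and phi: "psh (U \<inter> D) \<phi>" and "open U"
    and N: "open N" "D - U \<subseteq> N" and below: "\<And>x. x \<in> N \<inter> U \<inter> D \<Longrightarrow> \<phi> x \<le> \<psi> x"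
  shows "psh D (\<lambda>x. if x \<in> U then max (\<phi> x) (\<psi> x) else \<psi> x)" (is "psh D ?w")
proof -
  have "open D" and usc_psi: "usc_on D \<psi>" and fin_psi: "\<And>x. x \<in> D \<Longrightarrow> \<psi> x < \<infinity>"
    using psi unfolding psh_def by auto
  have usc_phi: "usc_on (U \<inter> D) \<phi>" and fin_phi: "\<And>x. x \<in> U \<inter> D \<Longrightarrow> \<phi> x < \<infinity>"
    using phi unfolding psh_def by auto
  have "usc_on D ?w" by (rule usc_on_glue[OF usc_psi usc_phi \<open>open U\<close> N below])
  moreover have "?w x < \<infinity>" if "x \<in> D" for x
    using that fin_psi[of x] fin_phi[of x] by (auto simp: max_def)
  moreover have "\<exists>r>0. \<forall>b. norm b < r \<longrightarrow> ?w x \<le> circle_mean ?w x b" if x: "x \<in> D" for x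
  proof (cases "x \<in> U")
    case True
    obtain r where r: "r > 0" "ball x r \<subseteq> U \<inter> D"
      using open_contains_ball[of "U \<inter> D"] \<open>open U\<close> \<open>open D\<close> True x by blast
    then have "ball x r \<subseteq> D" by blast
    have "?w x \<le> circle_mean ?w x b" if "norm b < r" for b
      using psh_submean_le[OF phi r(2) that, of ?w] psh_submean_le[OF psi \<open>ball x r \<subseteq> D\<close> that, of ?w] True
      by auto
    then show ?thesis using r(1) by blast
  next
    case False
    obtain r where "r > 0" "ball x r \<subseteq> D" using open_contains_ball \<open>open D\<close> x by blast
    then show ?thesis using psh_submean_le[OF psi, of x r _ ?w] False by auto
  qed
  ultimately show ?thesis by (rule psh_of_local_submean[OF \<open>open D\<close>])
qed

lemma circle_avg_minf_on_arc:
  assumes meas: "F \<in> borel_measurable borel" and B: "\<And>t. t \<in> {0..2*pi} \<Longrightarrow> F t \<le> ereal B"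
    and "0 < \<tau>" and arc: "\<And>t. t \<in> {0..\<tau>} \<Longrightarrow> F t = -\<infinity>"
  shows "circle_avg F = -\<infinity>"
proof -
  define B' where "B' = max B 0"
  have "0 \<le> B'" unfolding B'_def by simp
  have FB': "F t \<le> ereal B'" if "t \<in> {0..2*pi}" for t
    using B[OF that] by (rule order_trans) (simp add: B'_def)
  define Q where "Q = (\<integral>\<^sup>+ t. e2ennreal (ereal B' - F t) * indicator {0..2*pi} t \<partial>lborel)"
  have avg: "circle_avg F = ereal B' - enn2ereal Q / ereal (2*pi)"
    unfolding Q_def by (rule circle_avg_eq_bound_minus[OF meas FB' \<open>0 \<le> B'\<close>])
  define \<tau>' where "\<tau>' = min \<tau> (2*pi)"
  have "0 < \<tau>'" unfolding \<tau>'_def using \<open>0 < \<tau>\<close> by simp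
  then have "top = (\<integral>\<^sup>+ t. top * indicator {0..\<tau>'} t \<partial>lborel)"
    by (simp add: nn_integral_cmult_indicator ennreal_mult_top)
  also have "\<dots> \<le> Q"
    unfolding Q_def by (intro nn_integral_mono) (auto simp: \<tau>'_def arc indicator_def)
  finally have "Q = top" by (simp add: top_unique)
  then show ?thesis unfolding avg by simp
qed

lemma psh_minf_center_of_circle:
  fixes u :: "complex^'n \<Rightarrow> ereal"
  assumes psh: "psh G u" and disc: "\<And>\<zeta>. cmod \<zeta> \<le> 1 \<Longrightarrow> (\<chi> i. y $ i + \<zeta> * b $ i) \<in> G"
    and start: "circ_pt y b 0 \<in> interior {z\<in>G. u z = -\<infinity>}"
  shows "u y = -\<infinity>"
proof -
  obtain s where s: "s > 0" "ball (circ_pt y b 0) s \<subseteq> interior {z\<in>G. u z = -\<infinity>}"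
    using start open_contains_ball by blast
  have "isCont (circ_pt y b) 0" using continuous_on_circ_pt[of UNIV y b] by (simp add: continuous_on_eq_continuous_at)
  then obtain \<tau> where \<tau>: "\<tau> > 0" "\<forall>t. dist t 0 < \<tau> \<longrightarrow> dist (circ_pt y b t) (circ_pt y b 0) < s"
    using s(1) unfolding continuous_at_eps_delta by blast
  have arc: "u (circ_pt y b t) = -\<infinity>" if "t \<in> {0..\<tau>/2}" for t
  proof -
    have "dist (circ_pt y b t) (circ_pt y b 0) < s" using \<tau> that by auto
    then have "circ_pt y b t \<in> ball (circ_pt y b 0) s" by (simp add: dist_commute)
    then show ?thesis using s(2) interior_subset by blast
  qed
  obtain B where "\<forall>t. u (circ_pt y b t) \<le> ereal B" using psh_circle_bounds(2)[OF psh disc] by blast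
  then have "circle_mean u y b = -\<infinity>"
    unfolding circle_mean_eq_circle_avg using \<tau>(1) arc
    by (intro circle_avg_minf_on_arc[OF psh_circle_bounds(1)[OF psh disc], where \<tau>="\<tau>/2"]) auto
  then show ?thesis using psh_submean[OF psh disc] by simp
qed

lemma psh_minf_interior_closed:
  fixes u :: "complex^'n \<Rightarrow> ereal"
  assumes psh: "psh G u" and x: "x \<in> G" "x \<in> closure (interior {z\<in>G. u z = -\<infinity>})"
  shows "x \<in> interior {z\<in>G. u z = -\<infinity>}"
proof -
  define W where "W = interior {z\<in>G. u z = -\<infinity>}"
  obtain d where d: "d > 0" "cball x d \<subseteq> G" using x(1) psh open_contains_cball unfolding psh_def by blast
  have "ball x (d/3) \<subseteq> {z\<in>G. u z = -\<infinity>}"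
  proof
    fix y assume y: "y \<in> ball x (d/3)"
    obtain q where q: "q \<in> W" "dist q x < d/3"
      using x(2) d(1) unfolding W_def closure_approachable by (metis zero_less_divide_iff zero_less_numeral)
    define b where "b = q - y"
    have "norm b < 2*d/3"
      using dist_triangle[of q y x] q(2) y unfolding b_def by (simp add: dist_norm dist_commute)
    then have disc: "(\<chi> i. y $ i + \<zeta> * b $ i) \<in> G" if "cmod \<zeta> \<le> 1" for \<zeta>
      using disc_pt_in_ball[of b "2*d/3" \<zeta> y] that y d(2)
        dist_triangle[of x "\<chi> i. y $ i + \<zeta> * b $ i" y] by (force simp: dist_commute)
    have "circ_pt y b 0 = q" unfolding circ_pt_def b_def by (simp add: vec_eq_iff)
    then have "u y = -\<infinity>" using q(1) unfolding W_def by (intro psh_minf_center_of_circle[OF psh disc]) auto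
    moreover have "y \<in> G" using disc[of 0] by (simp add: vec_eq_iff)
    ultimately show "y \<in> {z\<in>G. u z = -\<infinity>}" by simp
  qed
  then have "ball x (d/3) \<subseteq> W" unfolding W_def by (rule interior_maximal) simp
  then show ?thesis using d(1) unfolding W_def by (meson centre_in_ball subsetD zero_less_divide_iff zero_less_numeral)
qed

lemma psh_minf_everywhere:
  fixes u :: "complex^'n \<Rightarrow> ereal"
  assumes "connected G" and psh: "psh G u" and "interior {z\<in>G. u z = -\<infinity>} \<noteq> {}"
  shows "\<forall>x\<in>G. u x = -\<infinity>"
proof -
  define W where "W = interior {z\<in>G. u z = -\<infinity>}"
  have "W \<subseteq> G" unfolding W_def using interior_subset by blast
  then have "openin (top_of_set G) W" unfolding openin_open W_def by blast
  moreover have "closedin (top_of_set G) W"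
    unfolding closedin_closed using psh_minf_interior_closed[OF psh] \<open>W \<subseteq> G\<close> closure_subset
    by (intro exI[of _ "closure W"]) (auto simp: W_def)
  ultimately have "W = G" using \<open>connected G\<close> assms(3) unfolding connected_clopen W_def by blast
  then show ?thesis using interior_subset unfolding W_def by blast
qed

section \<open>The relative extremal function near the pole set\<close>

text \<open>A pole of \<open>u\<close> near \<open>p\<close> would, by upper semicontinuity, have a whole neighbourhood
  of poles.\<close>

lemma usc_locally_bounded_below_off_poles:
  fixes u :: "'a::metric_space \<Rightarrow> ereal"
  assumes "open G" and usc: "usc_on G u" and no_interior: "interior {z\<in>G. u z = -\<infinity>} = {}"
    and bdd: "\<forall>z\<in>G - {w\<in>G. u w = -\<infinity>}. \<exists>r>0. \<exists>M::real.
           \<forall>w\<in>ball z r \<inter> (G - {w\<in>G. u w = -\<infinity>}). \<bar>u w\<bar> \<le> ereal M"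
    and p: "p \<in> G - {z\<in>G. u z = -\<infinity>}"
  shows "\<exists>r>0. \<exists>M. \<forall>x\<in>ball p r. x \<in> G \<and> ereal (- M) \<le> u x"
proof -
  define Z where "Z = {z\<in>G. u z = -\<infinity>}"
  obtain r1 M where r1: "r1 > 0" "\<forall>w\<in>ball p r1 \<inter> (G - Z). \<bar>u w\<bar> \<le> ereal M"
    using bdd p unfolding Z_def by blast
  obtain r2 where r2: "r2 > 0" "ball p r2 \<subseteq> G" using p \<open>open G\<close> open_contains_ball by blast
  define r where "r = min r1 r2"
  have "x \<in> G \<and> ereal (- M) \<le> u x" if x: "x \<in> ball p r" for x
  proof -
    have xG: "x \<in> G" using x r2(2) unfolding r_def by auto
    have "x \<notin> Z"
    proof
      assume "x \<in> Z"
      then have "u x < ereal (- M - 1)" unfolding Z_def by simp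
      then obtain T where T: "open T" "x \<in> T" "\<forall>y\<in>T\<inter>G. u y < ereal (- M - 1)"
        using usc_onD[OF usc xG] by blast
      have "T \<inter> ball p r \<subseteq> Z"
      proof
        fix y assume y: "y \<in> T \<inter> ball p r"
        then have "y \<in> G" "u y < ereal (- M - 1)" using T(3) r2(2) unfolding r_def by auto
        moreover have "\<bar>u y\<bar> \<le> ereal M" if "y \<notin> Z" using r1(2) y that \<open>y \<in> G\<close> unfolding r_def by auto
        ultimately show "y \<in> Z" by (cases "u y") (auto simp: Z_def)
      qed
      then have "x \<in> interior Z" using T(1,2) x by (meson IntI interior_maximal open_Int open_ball subsetD)
      then show False using no_interior unfolding Z_def by blast
    qed
    then have "\<bar>u x\<bar> \<le> ereal M" using r1(2) x xG unfolding r_def by auto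
    then show ?thesis using xG by (cases "u x") auto
  qed
  moreover have "r > 0" unfolding r_def using r1 r2 by simp
  ultimately show ?thesis by blast
qed

lemma compact_uniformly_bounded_below:
  fixes u :: "'a::metric_space \<Rightarrow> ereal"
  assumes "compact K" and loc: "\<And>p. p \<in> K \<Longrightarrow> \<exists>r>0. \<exists>M. \<forall>x\<in>ball p r. P x \<and> ereal (- M) \<le> u x"
  shows "\<exists>N M. open N \<and> K \<subseteq> N \<and> 0 \<le> M \<and> (\<forall>x\<in>N. P x \<and> ereal (- M) \<le> u x)"
proof -
  obtain r M where rM: "\<And>p. p \<in> K \<Longrightarrow> r p > 0 \<and> (\<forall>x\<in>ball p (r p). P x \<and> ereal (- M p) \<le> u x)"
    using loc by metis
  then obtain F where F: "F \<subseteq> K" "finite F" "K \<subseteq> (\<Union>p\<in>F. ball p (r p))"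
    using compactE_image[OF \<open>compact K\<close>, of K "\<lambda>p. ball p (r p)"] by force
  define M' where "M' = (\<Sum>p\<in>F. max (M p) 0)"
  have "P x \<and> ereal (- M') \<le> u x" if x: "x \<in> (\<Union>p\<in>F. ball p (r p))" for x
  proof -
    obtain p where p: "p \<in> F" "x \<in> ball p (r p)" using x by blast
    then have "P x" "ereal (- M p) \<le> u x" using rM F(1) by blast+
    moreover have "M p \<le> M'" unfolding M'_def
      using member_le_sum[OF p(1), of "\<lambda>p. max (M p) 0"] F(2) by force
    ultimately show ?thesis by (meson ereal_less_eq(3) neg_le_iff_le order_trans)
  qed
  moreover have "0 \<le> M'" unfolding M'_def by (simp add: sum_nonneg)
  ultimately show ?thesis using F(3) by (intro exI[of _ "\<Union>p\<in>F. ball p (r p)"] exI[of _ M']) auto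
qed

lemma rel_extremal_eq_if_approximable:
  assumes "open U" "open D" and z: "z \<in> U \<inter> D"
    and approx: "\<And>v \<eta>. psh (U \<inter> D) v \<Longrightarrow> \<forall>x\<in>E. v x \<le> -1 \<Longrightarrow> \<forall>x\<in>U \<inter> D. v x \<le> 0 \<Longrightarrow> 0 < \<eta>
       \<Longrightarrow> \<exists>w. psh D w \<and> (\<forall>x\<in>E. w x \<le> -1) \<and> (\<forall>x\<in>D. w x \<le> 0) \<and> v z - ereal \<eta> \<le> w z"
  shows "rel_extremal z E D = rel_extremal z E (U \<inter> D)"
proof -
  define S1 where "S1 = {v. psh D v \<and> (\<forall>x\<in>E. v x \<le> -1) \<and> (\<forall>x\<in>D. v x \<le> 0)}"
  define S2 where "S2 = {v. psh (U \<inter> D) v \<and> (\<forall>x\<in>E. v x \<le> -1) \<and> (\<forall>x\<in>U \<inter> D. v x \<le> 0)}"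
  have "S1 \<subseteq> S2"
    unfolding S1_def S2_def using psh_subset \<open>open U\<close> \<open>open D\<close> by blast
  then have "(SUP v\<in>S1. v z) \<le> (SUP v\<in>S2. v z)" by (rule SUP_subset_mono) simp
  moreover have "(SUP v\<in>S2. v z) \<le> (SUP v\<in>S1. v z)"
  proof (rule SUP_least)
    fix v assume "v \<in> S2"
    show "v z \<le> (SUP v\<in>S1. v z)"
    proof (rule ereal_le_epsilon2)
      fix \<eta> :: real assume "0 < \<eta>"
      then obtain w where "w \<in> S1" "v z - ereal \<eta> \<le> w z"
        using approx \<open>v \<in> S2\<close> unfolding S1_def S2_def by blast
      then have "v z - ereal \<eta> \<le> (SUP v\<in>S1. v z)" by (meson SUP_upper order_trans)
      then show "v z \<le> (SUP v\<in>S1. v z) + ereal \<eta>" by (cases "v z"; cases "SUP v\<in>S1. v z") auto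
    qed
  qed
  ultimately show ?thesis unfolding rel_extremal_def S1_def S2_def by simp
qed

text \<open>Glue \<open>v - \<eta>\<close> to \<open>\<epsilon> (u - B)\<close>, with \<open>\<epsilon>\<close> so small that \<open>\<epsilon> (u - B) \<ge> -\<eta>/2\<close> where \<open>u\<close>
  is bounded below.\<close>

lemma psh_extension_off_poles:
  fixes u v :: "complex^'n \<Rightarrow> ereal"
  assumes psh_u: "psh G u" and "open D" "D \<subseteq> G" and "open U"
    and N: "open N" "D - U \<subseteq> N" and below: "\<And>x. x \<in> N \<inter> D \<Longrightarrow> ereal (- M) \<le> u x"
    and above: "\<And>x. x \<in> D \<Longrightarrow> u x \<le> ereal B" and "0 \<le> M" "0 \<le> B"
    and psh_v: "psh (U \<inter> D) v" and v_nonpos: "\<And>x. x \<in> U \<inter> D \<Longrightarrow> v x \<le> 0" and "0 < \<eta>"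
  shows "\<exists>w. psh D w \<and> (\<forall>x\<in>D. w x \<le> 0) \<and> (\<forall>x\<in>U\<inter>D. v x - ereal \<eta> \<le> w x)
           \<and> (\<forall>x\<in>U\<inter>D. u x = -\<infinity> \<longrightarrow> w x = v x - ereal \<eta>)"
proof -
  define \<epsilon> where "\<epsilon> = \<eta> / (2 * (M + B + 1))"
  have "0 < \<epsilon>" unfolding \<epsilon>_def using \<open>0 < \<eta>\<close> \<open>0 \<le> M\<close> \<open>0 \<le> B\<close> by simp
  have small: "\<epsilon> * (M + B) \<le> \<eta> / 2"
  proof -
    have "\<epsilon> * (M + B) \<le> \<epsilon> * (M + B + 1)" using \<open>0 < \<epsilon>\<close> by simp
    also have "\<dots> = \<eta> / 2" unfolding \<epsilon>_def using \<open>0 \<le> M\<close> \<open>0 \<le> B\<close> by (simp add: field_simps)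
    finally show ?thesis .
  qed
  define \<psi> where "\<psi> x = ereal \<epsilon> * (u x - ereal B)" for x
  define \<phi> where "\<phi> x = v x - ereal \<eta>" for x
  define w where "w x = (if x \<in> U then max (\<phi> x) (\<psi> x) else \<psi> x)" for x
  have psh_\<psi>: "psh D \<psi>"
    unfolding \<psi>_def by (rule psh_subset[OF psh_cmult_diff_const[OF psh_u \<open>0 < \<epsilon>\<close>] \<open>open D\<close> \<open>D \<subseteq> G\<close>])
  have \<psi>_nonpos: "\<psi> x \<le> 0" if "x \<in> D" for x
  proof -
    have "u x - ereal B \<le> 0" using above[OF that] by (cases "u x") auto
    then show ?thesis unfolding \<psi>_def using \<open>0 < \<epsilon>\<close> by (simp add: ereal_mult_le_0_iff)
  qed
  have \<phi>_le_\<psi>: "\<phi> x \<le> \<psi> x" if x: "x \<in> N \<inter> U \<inter> D" for x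
  proof -
    obtain r where r: "u x = ereal r" "- M \<le> r" "r \<le> B"
      using below[of x] above[of x] x by (cases "u x") auto
    have "- (\<epsilon> * (M + B)) \<le> \<epsilon> * (r - B)"
      using mult_left_mono[of "- M" r \<epsilon>] r \<open>0 < \<epsilon>\<close> by (simp add: algebra_simps)
    then have "ereal (- \<eta> / 2) \<le> \<psi> x" unfolding \<psi>_def using r small by simp
    moreover have "\<phi> x \<le> ereal (- \<eta> / 2)"
      using v_nonpos[of x] x \<open>0 < \<eta>\<close> unfolding \<phi>_def by (cases "v x") auto
    ultimately show ?thesis by simp
  qed
  have "psh D w"
    unfolding w_def \<phi>_def by (rule psh_glue[OF psh_\<psi> psh_diff_const[OF psh_v] \<open>open U\<close> N]) (use \<phi>_le_\<psi> in \<open>auto simp: \<phi>_def\<close>)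
  moreover have "w x \<le> 0" if "x \<in> D" for x
    using \<psi>_nonpos[OF that] v_nonpos[of x] that \<open>0 < \<eta>\<close> unfolding w_def \<phi>_def
    by (cases "v x") auto
  moreover have "u x = -\<infinity> \<Longrightarrow> \<psi> x = -\<infinity>" for x unfolding \<psi>_def using \<open>0 < \<epsilon>\<close> by simp
  ultimately show ?thesis unfolding w_def \<phi>_def by auto
qed

lemma rel_extremal_eq_near_poles:
  fixes u :: "complex^'n \<Rightarrow> ereal"
  assumes psh_u: "psh G u" and "open D" "D \<subseteq> G" "open U"
    and N: "open N" "D - U \<subseteq> N" and below: "\<And>x. x \<in> N \<inter> D \<Longrightarrow> ereal (- M) \<le> u x"
    and above: "\<And>x. x \<in> D \<Longrightarrow> u x \<le> ereal B" and "0 \<le> M" "0 \<le> B"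
    and poles: "E \<subseteq> {x\<in>U \<inter> D. u x = -\<infinity>}" and z: "z \<in> U \<inter> D"
  shows "rel_extremal z E D = rel_extremal z E (U \<inter> D)"
proof (rule rel_extremal_eq_if_approximable[OF \<open>open U\<close> \<open>open D\<close> z])
  fix v and \<eta> :: real
  assume v: "psh (U \<inter> D) v" "\<forall>x\<in>E. v x \<le> -1" "\<forall>x\<in>U \<inter> D. v x \<le> 0" and "0 < \<eta>"
  have v_nonpos: "v x \<le> 0" if "x \<in> U \<inter> D" for x using v(3) that by blast
  obtain w where w: "psh D w" "\<forall>x\<in>D. w x \<le> 0" "\<forall>x\<in>U\<inter>D. v x - ereal \<eta> \<le> w x"
      "\<forall>x\<in>U\<inter>D. u x = -\<infinity> \<longrightarrow> w x = v x - ereal \<eta>"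
    using psh_extension_off_poles[OF psh_u \<open>open D\<close> \<open>D \<subseteq> G\<close> \<open>open U\<close> N below above
        \<open>0 \<le> M\<close> \<open>0 \<le> B\<close> v(1) v_nonpos \<open>0 < \<eta>\<close>] by blast
  have "w x \<le> -1" if x: "x \<in> E" for x
  proof -
    have "w x = v x - ereal \<eta>" using w(4) poles x by blast
    then show ?thesis using v(2) x \<open>0 < \<eta>\<close> by (cases "v x") (auto simp: one_ereal_def)
  qed
  then show "\<exists>w. psh D w \<and> (\<forall>x\<in>E. w x \<le> -1) \<and> (\<forall>x\<in>D. w x \<le> 0) \<and> v z - ereal \<eta> \<le> w z"
    using w(1,2) w(3)[rule_format, OF z] by blast
qed

theorem theorem3p6:
  fixes G D U E :: "(complex^'n) set" and u :: "complex^'n \<Rightarrow> ereal"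
  assumes "open G" and "connected G"
    and "E \<subseteq> G" and "pluripolar E"
    and "psh G u"
    and "E \<subseteq> {z\<in>G. u z = -\<infinity>}"
    and "\<forall>z\<in>G - {w\<in>G. u w = -\<infinity>}. \<exists>r>0. \<exists>M::real.
           \<forall>w\<in>ball z r \<inter> (G - {w\<in>G. u w = -\<infinity>}). \<bar>u w\<bar> \<le> ereal M"
    and "open D" and "connected D" and "compact (closure D)" and "closure D \<subseteq> G"
    and "open U" and "{z\<in>G. u z = -\<infinity>} \<subseteq> U"
  shows "\<forall>z\<in>U \<inter> D. rel_extremal z (E \<inter> D) D = rel_extremal z (E \<inter> D) (U \<inter> D)"
proof (cases "interior {z\<in>G. u z = -\<infinity>} = {}")
  case False
  have "D \<subseteq> G" using assms(11) closure_subset by blast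
  then have "D \<subseteq> U" using psh_minf_everywhere[OF assms(2,5) False] assms(13) by blast
  then show ?thesis by (simp add: Int_absorb1)
next
  case True
  have usc: "usc_on G u" and fin: "\<And>z. z \<in> G \<Longrightarrow> u z < \<infinity>" using assms(5) unfolding psh_def by auto
  have "\<exists>r>0. \<exists>M. \<forall>x\<in>ball p r. x \<in> G \<and> ereal (- M) \<le> u x" if "p \<in> closure D - U" for p
    using that assms(11,13) by (intro usc_locally_bounded_below_off_poles[OF assms(1) usc True assms(7)]) auto
  from compact_uniformly_bounded_below[OF compact_diff[OF assms(10,12)] this]
  obtain N M where N: "open N" "closure D - U \<subseteq> N" "0 \<le> M" "\<forall>x\<in>N. x \<in> G \<and> ereal (- M) \<le> u x"
    by blast
  obtain B where B: "0 \<le> B" "\<forall>x\<in>closure D. u x \<le> ereal B"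
    using usc_on_bounded_above[OF usc assms(10,11)] fin assms(11) by blast
  have "D \<subseteq> closure D" by (rule closure_subset)
  then have "D \<subseteq> G" "D - U \<subseteq> N" "E \<inter> D \<subseteq> {x\<in>U \<inter> D. u x = -\<infinity>}"
    using assms(6,11,13) N(2) by auto
  then show ?thesis
    using N(4) B(2) \<open>D \<subseteq> closure D\<close>
    by (intro ballI rel_extremal_eq_near_poles[OF assms(5,8) _ assms(12) N(1) _ _ _ N(3) B(1)]) auto
qed

end
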